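(* In the setting of the context, let $\hat V\in C^{0,\alpha}(\Sigma,\mathbb{R})$ with $\hat V(x)>0$ for all $x$. Then there is a unique $c\in\mathbb{R}$ with $P(-c\hat V)=0$. Moreover $c>0$ if $P(0)>0$ and $c<0$ if $P(0)<0$.
   Context: $\Sigma=\{1,\dots,t\}^{\mathbb{N}}$ with the metric $d_\gamma(x,y)=\inf\{\gamma^{k+1}:x_j=y_j,\ j\le k\}$ (fixed $\gamma\in(0,1)$), $\sigma$ the shift, $ix=(i,x_0,x_1,\dots)$. $\psi_1,\dots,\psi_t$ are affine bijections of $\mathbb{R}^d$ with $\max\mathrm{Lip}(\psi_i)<1$, $q\in\{1,\dots,d\}$, $(D\psi_i)_*$ the pull-back on $\Lambda^q(\mathbb{R}^d)$, $M^q$ the self-adjoint operators on $\Lambda^q$, $\Psi_i(A)={}^t(D\psi_i)_*A(D\psi_i)_*$. Assume $(ND_q)$: there is $\gamma'>0$ such that for all $c,e\in\Lambda^q$ some $i$ has $|((D\psi_i)_*c,e)|\ge\gamma'\|c\|\|e\|$. For $W\in C^{0,\alpha}(\Sigma,\mathbb{R})$ the Ruelle operator $(\mathcal{L}_WA)(x)=\sum_ie^{W(ix)}\Psi_i(A(ix))$ on $C(\Sigma,M^q)$ has a unique eigenvalue $\beta_W>0$ admitting an eigenfunction in $C(\Sigma,M^q)$ positive definite at every point; the pressure is $P(W)=\log\beta_W$. *)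

theory Defs
  imports "HOL-Analysis.Analysis"
begin

text \<open>Symbolic space: alphabet {0..<t} (standing for {1..t}); points are sequences.\<close>
definition Sigma_sp :: "nat \<Rightarrow> (nat \<Rightarrow> nat) set" where
  "Sigma_sp t = {x. \<forall>n. x n < t}"

text \<open>d_gamma(x,y) = gamma^(k+1), k+1 = first index of disagreement.\<close>
definition dgam :: "real \<Rightarrow> (nat \<Rightarrow> nat) \<Rightarrow> (nat \<Rightarrow> nat) \<Rightarrow> real" where
  "dgam \<gamma> x y = (if x = y then 0 else \<gamma> ^ (LEAST n. x n \<noteq> y n))"

definition scons :: "nat \<Rightarrow> (nat \<Rightarrow> nat) \<Rightarrow> (nat \<Rightarrow> nat)" where
  "scons i x = case_nat i x"

definition holder :: "nat \<Rightarrow> real \<Rightarrow> real \<Rightarrow> ((nat \<Rightarrow> nat) \<Rightarrow> real) \<Rightarrow> bool" where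
  "holder t \<gamma> \<alpha> W \<longleftrightarrow> (\<exists>C. \<forall>x\<in>Sigma_sp t. \<forall>y\<in>Sigma_sp t.
      \<bar>W x - W y\<bar> \<le> C * dgam \<gamma> x y powr \<alpha>)"

text \<open>Lambda^q(R^d): coefficient functions on the basis dx_I, I a q-subset of the
  (linearly ordered) coordinate index type; only values on qidx q matter.\<close>
definition qidx :: "nat \<Rightarrow> 'n::{finite,linorder} set set" where
  "qidx q = {I. card I = q}"

definition ipq :: "nat \<Rightarrow> ('n::{finite,linorder} set \<Rightarrow> real) \<Rightarrow> ('n::{finite,linorder} set \<Rightarrow> real) \<Rightarrow> real" where
  "ipq q c e = (\<Sum>I\<in>qidx q. c I * e I)"

definition normq :: "nat \<Rightarrow> ('n::{finite,linorder} set \<Rightarrow> real) \<Rightarrow> real" where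
  "normq q c = sqrt (ipq q c c)"

definition minor :: "real^('n::{finite,linorder})^'n::{finite,linorder} \<Rightarrow> nat \<Rightarrow> 'n::{finite,linorder} set \<Rightarrow> 'n::{finite,linorder} set \<Rightarrow> real" where
  "minor L q J K = (\<Sum>p\<in>{p. p permutes {..<q}}. of_int (sign p) *
      (\<Prod>k<q. L $ (sorted_list_of_set J ! k) $ (sorted_list_of_set K ! p k)))"

text \<open>pull-back L_* on Lambda^q: L^*(dx_J) = sum_K minor L J K dx_K\<close>
definition pullback :: "real^('n::{finite,linorder})^'n::{finite,linorder} \<Rightarrow> nat \<Rightarrow> ('n::{finite,linorder} set \<Rightarrow> real) \<Rightarrow> ('n::{finite,linorder} set \<Rightarrow> real)" where
  "pullback L q c = (\<lambda>K. \<Sum>J\<in>qidx q. minor L q J K * c J)"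

text \<open>Psi(A) = ^t(L_*) A (L_*), matrix of L_* has (K,J)-entry minor L J K\<close>
definition Psi_op :: "real^('n::{finite,linorder})^'n::{finite,linorder} \<Rightarrow> nat \<Rightarrow> ('n::{finite,linorder} set \<Rightarrow> 'n::{finite,linorder} set \<Rightarrow> real)
    \<Rightarrow> ('n::{finite,linorder} set \<Rightarrow> 'n::{finite,linorder} set \<Rightarrow> real)" where
  "Psi_op L q A = (\<lambda>K K'. \<Sum>J\<in>qidx q. \<Sum>J'\<in>qidx q. minor L q K J * A J J' * minor L q K' J')"

text \<open>M^q: self-adjoint operators on Lambda^q (as symmetric matrices w.r.t. the
  orthonormal basis dx_I, vanishing outside qidx q).\<close>
definition Mq :: "nat \<Rightarrow> ('n::{finite,linorder} set \<Rightarrow> 'n::{finite,linorder} set \<Rightarrow> real) set" where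
  "Mq q = {A. (\<forall>I J. A I J = A J I) \<and> (\<forall>I J. I \<notin> qidx q \<or> J \<notin> qidx q \<longrightarrow> A I J = 0)}"

definition posdef :: "nat \<Rightarrow> ('n::{finite,linorder} set \<Rightarrow> 'n::{finite,linorder} set \<Rightarrow> real) \<Rightarrow> bool" where
  "posdef q B \<longleftrightarrow> (\<forall>c. (\<exists>I\<in>qidx q. c I \<noteq> 0) \<longrightarrow>
      (\<Sum>I\<in>qidx q. \<Sum>J\<in>qidx q. c I * B I J * c J) > 0)"

definition contM :: "nat \<Rightarrow> real \<Rightarrow> nat \<Rightarrow> ((nat \<Rightarrow> nat) \<Rightarrow> ('n::{finite,linorder} set \<Rightarrow> 'n::{finite,linorder} set \<Rightarrow> real)) \<Rightarrow> bool" where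
  "contM t \<gamma> q A \<longleftrightarrow> (\<forall>x\<in>Sigma_sp t. A x \<in> Mq q) \<and>
     (\<forall>x\<in>Sigma_sp t. \<forall>\<epsilon>>0. \<exists>\<delta>>0. \<forall>y\<in>Sigma_sp t. dgam \<gamma> x y < \<delta> \<longrightarrow>
        (\<forall>I J. \<bar>A y I J - A x I J\<bar> < \<epsilon>))"

definition Dlin :: "(real^('n::{finite,linorder}) \<Rightarrow> real^('n::{finite,linorder})) \<Rightarrow> real^('n::{finite,linorder})^'n::{finite,linorder}" where
  "Dlin \<psi> = matrix (\<lambda>x. \<psi> x - \<psi> 0)"

definition ruelle :: "nat \<Rightarrow> (nat \<Rightarrow> real^('n::{finite,linorder}) \<Rightarrow> real^('n::{finite,linorder})) \<Rightarrow> nat \<Rightarrow> ((nat \<Rightarrow> nat) \<Rightarrow> real)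
    \<Rightarrow> ((nat \<Rightarrow> nat) \<Rightarrow> ('n::{finite,linorder} set \<Rightarrow> 'n::{finite,linorder} set \<Rightarrow> real))
    \<Rightarrow> (nat \<Rightarrow> nat) \<Rightarrow> ('n::{finite,linorder} set \<Rightarrow> 'n::{finite,linorder} set \<Rightarrow> real)" where
  "ruelle t \<psi> q W A x = (\<lambda>K K'. \<Sum>i<t. exp (W (scons i x)) * Psi_op (Dlin (\<psi> i)) q (A (scons i x)) K K')"

definition betaW :: "nat \<Rightarrow> real \<Rightarrow> (nat \<Rightarrow> real^('n::{finite,linorder}) \<Rightarrow> real^('n::{finite,linorder})) \<Rightarrow> nat \<Rightarrow> ((nat \<Rightarrow> nat) \<Rightarrow> real) \<Rightarrow> real" where
  "betaW t \<gamma> \<psi> q W = (THE \<beta>. \<beta> > 0 \<and> (\<exists>A::(nat \<Rightarrow> nat) \<Rightarrow> ('n::{finite,linorder} set \<Rightarrow> 'n::{finite,linorder} set \<Rightarrow> real).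
      contM t \<gamma> q A \<and> (\<forall>x\<in>Sigma_sp t. posdef q (A x)) \<and>
      (\<forall>x\<in>Sigma_sp t. \<forall>K\<in>qidx q. \<forall>K'\<in>qidx q. ruelle t \<psi> q W A x K K' = \<beta> * A x K K')))"

definition pressure :: "nat \<Rightarrow> real \<Rightarrow> (nat \<Rightarrow> real^('n::{finite,linorder}) \<Rightarrow> real^('n::{finite,linorder})) \<Rightarrow> nat \<Rightarrow> ((nat \<Rightarrow> nat) \<Rightarrow> real) \<Rightarrow> real" where
  "pressure t \<gamma> \<psi> q W = ln (betaW t \<gamma> \<psi> q W)"

end

theory Submission
  imports Defs
begin

text \<open>
  Comparing iterates of two Ruelle operators on their positive eigenfunctions shows that
  \<open>W\<^sub>1 \<le> W\<^sub>2 + \<delta>\<close> on \<open>\<Sigma>\<close> implies \<open>\<beta>\<^bsub>W\<^sub>1\<^esub> \<le> exp \<delta> * \<beta>\<^bsub>W\<^sub>2\<^esub>\<close>, i.e.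
  \<open>P(W\<^sub>1) \<le> P(W\<^sub>2) + \<delta>\<close>. Hence \<open>c \<mapsto> P(-c V)\<close> is Lipschitz and decreases with slope at
  most \<open>-min V < 0\<close>, so it has exactly one zero, which has the sign of \<open>P(0)\<close>.

  Since \<open>\<beta>\<^sub>W\<close> is defined by a description, it must be shown to exist uniquely. Uniqueness is the
  case \<open>\<delta> = 0\<close> of the comparison; for existence a positive eigenfunction is constructed.
  The iterates \<open>L\<^sub>W\<^sup>k Id\<close> stay in a cone of positive semidefinite fields that are
  log-Hoelder along \<open>\<Sigma>\<close>. By \<open>(ND\<^sub>q)\<close> their traces are sub- and supermultiplicative up to
  constants, so they grow at an exact exponential rate \<open>\<lambda>\<close>, and a pointwise cluster point
  of the Cesaro means of \<open>\<lambda>\<^sup>-\<^sup>k L\<^sub>W\<^sup>k Id\<close> is a continuous positive definite eigenfunction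
  with eigenvalue \<open>\<lambda>\<close>.
\<close>

section \<open>Quadratic forms on a finite index set\<close>

definition qform :: "'a set \<Rightarrow> ('a \<Rightarrow> 'a \<Rightarrow> real) \<Rightarrow> ('a \<Rightarrow> real) \<Rightarrow> real" where
  "qform S P c = (\<Sum>I\<in>S. \<Sum>J\<in>S. c I * P I J * c J)"

definition bform :: "'a set \<Rightarrow> ('a \<Rightarrow> 'a \<Rightarrow> real) \<Rightarrow> ('a \<Rightarrow> real) \<Rightarrow> ('a \<Rightarrow> real) \<Rightarrow> real" where
  "bform S P c e = (\<Sum>I\<in>S. \<Sum>J\<in>S. c I * P I J * e J)"

definition sqnorm :: "'a set \<Rightarrow> ('a \<Rightarrow> real) \<Rightarrow> real" where
  "sqnorm S c = (\<Sum>I\<in>S. (c I)\<^sup>2)"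

definition trace_on :: "'a set \<Rightarrow> ('a \<Rightarrow> 'a \<Rightarrow> real) \<Rightarrow> real" where
  "trace_on S P = (\<Sum>I\<in>S. P I I)"

definition basis_vec :: "'a \<Rightarrow> 'a \<Rightarrow> real" where
  "basis_vec I = (\<lambda>J. of_bool (J = I))"

definition symm_on :: "'a set \<Rightarrow> ('a \<Rightarrow> 'a \<Rightarrow> real) \<Rightarrow> bool" where
  "symm_on S P \<longleftrightarrow> (\<forall>I\<in>S. \<forall>J\<in>S. P I J = P J I)"

definition psd_on :: "'a set \<Rightarrow> ('a \<Rightarrow> 'a \<Rightarrow> real) \<Rightarrow> bool" where
  "psd_on S P \<longleftrightarrow> (\<forall>c. 0 \<le> qform S P c)"

lemma qform_eq_bform: "qform S P c = bform S P c c"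
  by (simp add: qform_def bform_def)

lemma sqnorm_nonneg: "0 \<le> sqnorm S c"
  by (simp add: sqnorm_def sum_nonneg)

lemma sqnorm_cong: "(\<And>I. I \<in> S \<Longrightarrow> c I = c' I) \<Longrightarrow> sqnorm S c = sqnorm S c'"
  unfolding sqnorm_def by (intro sum.cong) auto

lemma sqnorm_basis_vec: "finite S \<Longrightarrow> I \<in> S \<Longrightarrow> sqnorm S (basis_vec I) = 1"
  unfolding sqnorm_def basis_vec_def by (simp add: power2_eq_square)

lemma sqnorm_eq_0_imp: "finite S \<Longrightarrow> sqnorm S c = 0 \<Longrightarrow> I \<in> S \<Longrightarrow> c I = 0"
  unfolding sqnorm_def by (subst (asm) sum_nonneg_eq_0_iff) auto

lemma sq_le_sqnorm: "finite S \<Longrightarrow> I \<in> S \<Longrightarrow> (c I)\<^sup>2 \<le> sqnorm S c"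
  unfolding sqnorm_def by (rule member_le_sum) auto

lemma bform_commute: "symm_on S P \<Longrightarrow> bform S P c e = bform S P e c"
  unfolding bform_def symm_on_def
  by (subst sum.swap) (auto intro!: sum.cong simp: mult_ac)

lemma bform_add_scaled_left: "bform S P (\<lambda>I. c I + s * d I) e = bform S P c e + s * bform S P d e"
  by (simp add: bform_def algebra_simps sum.distrib sum_distrib_left)

lemma bform_add_scaled_right: "bform S P c (\<lambda>I. d I + s * e I) = bform S P c d + s * bform S P c e"
  by (simp add: bform_def algebra_simps sum.distrib sum_distrib_left)

lemma qform_add_scaled:
  assumes "symm_on S P"
  shows "qform S P (\<lambda>I. c I + s * e I) = qform S P c + 2 * s * bform S P c e + s\<^sup>2 * qform S P e"
  using bform_commute[OF assms, of e c]
  by (simp add: qform_eq_bform bform_add_scaled_left bform_add_scaled_right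
      power2_eq_square algebra_simps)

lemma bform_Cauchy_Schwarz:
  assumes "symm_on S P" "psd_on S P"
  shows "(bform S P c e)\<^sup>2 \<le> qform S P c * qform S P e"
proof -
  have pos: "0 \<le> qform S P c + 2 * s * bform S P c e + s\<^sup>2 * qform S P e" for s
    using assms qform_add_scaled[OF assms(1), of c s e] unfolding psd_on_def by metis
  have qc: "0 \<le> qform S P c" using assms(2) unfolding psd_on_def by auto
  show ?thesis
  proof (cases "qform S P e = 0")
    case True
    have "bform S P c e = 0"
    proof (rule ccontr)
      assume nz: "bform S P c e \<noteq> 0"
      have "2 * (- (qform S P c + 1) / (2 * bform S P c e)) * bform S P c e = - (qform S P c + 1)"
        using nz by (simp add: field_simps)
      thus False using pos[of "- (qform S P c + 1) / (2 * bform S P c e)"] True by simp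
    qed
    thus ?thesis using qc True by simp
  next
    case False
    hence ep: "qform S P e > 0" using assms(2) unfolding psd_on_def by (simp add: order_less_le)
    have "0 \<le> qform S P c - (bform S P c e)\<^sup>2 / qform S P e"
      using pos[of "- bform S P c e / qform S P e"] ep by (simp add: field_simps power2_eq_square)
    thus ?thesis using ep by (simp add: field_simps)
  qed
qed

lemma bform_basis_vec_right:
  assumes "finite S" "J \<in> S"
  shows "bform S P c (basis_vec J) = (\<Sum>I\<in>S. c I * P I J)"
  using assms unfolding bform_def basis_vec_def by simp

lemma bform_basis_vec:
  assumes "finite S" "I \<in> S" "J \<in> S"
  shows "bform S P (basis_vec I) (basis_vec J) = P I J"
  using assms by (simp add: bform_basis_vec_right) (simp add: basis_vec_def)

lemma qform_basis_vec: "finite S \<Longrightarrow> I \<in> S \<Longrightarrow> qform S P (basis_vec I) = P I I"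
  by (simp add: qform_eq_bform bform_basis_vec)

lemma qform_cong: "(\<And>I. I \<in> S \<Longrightarrow> c I = c' I) \<Longrightarrow> qform S P c = qform S P c'"
  unfolding qform_def by (intro sum.cong) auto

lemma qform_cong_matrix:
  "(\<And>I J. I \<in> S \<Longrightarrow> J \<in> S \<Longrightarrow> P I J = P' I J) \<Longrightarrow> qform S P c = qform S P' c"
  unfolding qform_def by (intro sum.cong) auto

lemma qform_zero_matrix [simp]: "qform S (\<lambda>I J. 0) c = 0"
  by (simp add: qform_def)

lemma qform_scale: "qform S (\<lambda>I J. a * P I J) c = a * qform S P c"
  by (simp add: qform_def algebra_simps sum_distrib_left)

lemma qform_diff: "qform S (\<lambda>I J. P I J - P' I J) c = qform S P c - qform S P' c"
  by (simp add: qform_def algebra_simps sum_subtractf)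

lemma qform_sum: "qform S (\<lambda>I J. \<Sum>k\<in>F. f k I J) c = (\<Sum>k\<in>F. qform S (f k) c)"
  unfolding qform_def by (simp add: sum_distrib_left sum_distrib_right sum.swap[of _ F] mult_ac)

lemma qform_id:
  assumes "finite S"
  shows "qform S (\<lambda>I J. of_bool (I = J)) c = sqnorm S c"
  unfolding qform_def sqnorm_def
proof (intro sum.cong refl)
  fix I assume "I \<in> S"
  have "(\<Sum>J\<in>S. c I * of_bool (I = J) * c J) = (\<Sum>J\<in>S. of_bool (J = I) * (c I * c J))"
    by (intro sum.cong) auto
  thus "(\<Sum>J\<in>S. c I * of_bool (I = J) * c J) = (c I)\<^sup>2"
    using assms \<open>I \<in> S\<close> by (simp add: power2_eq_square)
qed

lemma psd_on_diag_nonneg: "psd_on S P \<Longrightarrow> finite S \<Longrightarrow> I \<in> S \<Longrightarrow> 0 \<le> P I I"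
  using qform_basis_vec unfolding psd_on_def by metis

lemma trace_on_nonneg: "finite S \<Longrightarrow> psd_on S P \<Longrightarrow> 0 \<le> trace_on S P"
  unfolding trace_on_def by (intro sum_nonneg) (auto intro: psd_on_diag_nonneg)

lemma trace_on_eq_sum_qform: "finite S \<Longrightarrow> trace_on S P = (\<Sum>I\<in>S. qform S P (basis_vec I))"
  unfolding trace_on_def by (intro sum.cong) (auto simp: qform_basis_vec)

lemma trace_on_le_of_qform_le:
  "finite S \<Longrightarrow> (\<And>c. qform S P c \<le> a * qform S P' c) \<Longrightarrow> trace_on S P \<le> a * trace_on S P'"
  by (simp add: trace_on_eq_sum_qform sum_distrib_left sum_mono)

lemma trace_on_ge_of_qform_ge:
  "finite S \<Longrightarrow> (\<And>c. a * qform S P' c \<le> qform S P c) \<Longrightarrow> a * trace_on S P' \<le> trace_on S P"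
  by (simp add: trace_on_eq_sum_qform sum_distrib_left sum_mono)

lemma psd_on_entry_le_trace_on:
  assumes S: "finite S" and P: "symm_on S P" "psd_on S P" and IJ: "I \<in> S" "J \<in> S"
  shows "\<bar>P I J\<bar> \<le> trace_on S P"
proof (cases "I = J")
  case True
  thus ?thesis using assms psd_on_diag_nonneg[OF P(2) S] unfolding trace_on_def
    by (auto intro: member_le_sum)
next
  case False
  have "0 \<le> qform S P (\<lambda>K. basis_vec I K + s * basis_vec J K)" for s
    using P(2) unfolding psd_on_def by blast
  hence "0 \<le> P I I + 2 * s * P I J + s\<^sup>2 * P J J" for s
    using assms by (simp add: qform_add_scaled qform_basis_vec bform_basis_vec)
  from this[of 1] this[of "-1"] have "\<bar>P I J\<bar> \<le> P I I + P J J" by (simp add: abs_le_iff)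
  also have "P I I + P J J = (\<Sum>K\<in>{I,J}. P K K)" using False by simp
  also have "\<dots> \<le> trace_on S P" unfolding trace_on_def
    by (rule sum_mono2) (use assms in \<open>auto intro: psd_on_diag_nonneg\<close>)
  finally show ?thesis .
qed

lemma sum_abs_squared_le: "(\<Sum>I\<in>S. \<bar>c I\<bar>)\<^sup>2 \<le> real (card S) * sqnorm S c"
  using sum_squared_le_sum_of_squares[of "\<lambda>I. \<bar>c I\<bar>" S] by (simp add: sqnorm_def mult.commute)

lemma qform_diff_le:
  assumes S: "finite S" and e: "\<forall>I\<in>S. \<forall>J\<in>S. \<bar>P I J - P' I J\<bar> \<le> e"
  shows "\<bar>qform S P c - qform S P' c\<bar> \<le> e * real (card S) * sqnorm S c"
proof (cases "S = {}")
  case True thus ?thesis by (simp add: qform_def)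
next
  case False
  then obtain I where "I \<in> S" by blast
  hence e0: "0 \<le> e" using e abs_ge_zero order_trans by blast
  have "\<bar>qform S P c - qform S P' c\<bar> = \<bar>\<Sum>I\<in>S. \<Sum>J\<in>S. c I * (P I J - P' I J) * c J\<bar>"
    unfolding qform_def by (simp add: sum_subtractf[symmetric] algebra_simps)
  also have "\<dots> \<le> (\<Sum>I\<in>S. \<Sum>J\<in>S. \<bar>c I * (P I J - P' I J) * c J\<bar>)"
    by (rule order_trans[OF sum_abs]) (intro sum_mono sum_abs)
  also have "\<dots> \<le> (\<Sum>I\<in>S. \<Sum>J\<in>S. e * (\<bar>c I\<bar> * \<bar>c J\<bar>))"
  proof (intro sum_mono)
    fix I J assume "I \<in> S" "J \<in> S"
    hence "\<bar>P I J - P' I J\<bar> * (\<bar>c I\<bar> * \<bar>c J\<bar>) \<le> e * (\<bar>c I\<bar> * \<bar>c J\<bar>)"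
      using e by (intro mult_right_mono) auto
    thus "\<bar>c I * (P I J - P' I J) * c J\<bar> \<le> e * (\<bar>c I\<bar> * \<bar>c J\<bar>)" by (simp add: abs_mult mult_ac)
  qed
  also have "\<dots> = e * (\<Sum>I\<in>S. \<bar>c I\<bar>)\<^sup>2"
    by (simp add: power2_eq_square sum_product sum_distrib_left sum_distrib_right mult_ac)
  also have "\<dots> \<le> e * (real (card S) * sqnorm S c)"
    using e0 by (intro mult_left_mono sum_abs_squared_le)
  finally show ?thesis by (simp add: mult.assoc)
qed

lemma qform_le_entry_sum:
  assumes "finite S"
  shows "qform S P c \<le> (\<Sum>I\<in>S. \<Sum>J\<in>S. \<bar>P I J\<bar>) * real (card S) * sqnorm S c"
proof -
  have "\<bar>P I J - 0\<bar> \<le> (\<Sum>I\<in>S. \<Sum>J\<in>S. \<bar>P I J\<bar>)" if "I \<in> S" "J \<in> S" for I J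
  proof -
    have "\<bar>P I J\<bar> \<le> (\<Sum>J\<in>S. \<bar>P I J\<bar>)" using assms that by (intro member_le_sum) auto
    also have "\<dots> \<le> (\<Sum>I\<in>S. \<Sum>J\<in>S. \<bar>P I J\<bar>)" using assms that
      by (intro member_le_sum[of I S "\<lambda>I. \<Sum>J\<in>S. \<bar>P I J\<bar>"]) (auto intro: sum_nonneg)
    finally show ?thesis by simp
  qed
  hence "\<bar>qform S P c - qform S (\<lambda>I J. 0) c\<bar> \<le> (\<Sum>I\<in>S. \<Sum>J\<in>S. \<bar>P I J\<bar>) * real (card S) * sqnorm S c"
    by (intro qform_diff_le[OF assms]) auto
  thus ?thesis by simp
qed

lemma qform_le_trace_on:
  assumes "finite S" "symm_on S P" "psd_on S P"
  shows "qform S P c \<le> trace_on S P * real (card S) * sqnorm S c"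
  using qform_diff_le[of S P "\<lambda>I J. 0" "trace_on S P" c] psd_on_entry_le_trace_on[OF assms]
    assms(1) by auto

lemma symm_on_entry_le_of_qform_le:
  assumes S: "finite S" and D: "symm_on S D" and b: "\<And>c. \<bar>qform S D c\<bar> \<le> b * sqnorm S c"
    and IJ: "I \<in> S" "J \<in> S"
  shows "\<bar>D I J\<bar> \<le> 3 * b"
proof -
  have b1: "\<bar>qform S D (basis_vec K)\<bar> \<le> b" if "K \<in> S" for K
    using b[of "basis_vec K"] S that by (simp add: sqnorm_basis_vec)
  have "sqnorm S (\<lambda>K. basis_vec I K + 1 * basis_vec J K)
      \<le> (\<Sum>K\<in>S. 2 * ((basis_vec I K)\<^sup>2 + (basis_vec J K)\<^sup>2))"
    unfolding sqnorm_def by (intro sum_mono) (auto simp: basis_vec_def)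
  also have "\<dots> = 2 * (sqnorm S (basis_vec I) + sqnorm S (basis_vec J))"
    by (simp add: sqnorm_def sum.distrib sum_distrib_left)
  finally have "sqnorm S (\<lambda>K. basis_vec I K + 1 * basis_vec J K) \<le> 4"
    using S IJ by (simp add: sqnorm_basis_vec)
  moreover have "0 \<le> b" using b1[OF IJ(1)] by linarith
  ultimately have b2: "\<bar>qform S D (\<lambda>K. basis_vec I K + 1 * basis_vec J K)\<bar> \<le> 4 * b"
    using b[of "\<lambda>K. basis_vec I K + 1 * basis_vec J K"] mult_left_mono[of _ 4 b] by fastforce
  have "qform S D (\<lambda>K. basis_vec I K + 1 * basis_vec J K)
      = qform S D (basis_vec I) + 2 * D I J + qform S D (basis_vec J)"
    using qform_add_scaled[OF D, of "basis_vec I" 1 "basis_vec J"] bform_basis_vec[OF S IJ] by simp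
  thus ?thesis using b1[OF IJ(1)] b1[OF IJ(2)] b2 by linarith
qed

lemma symm_on_eq_if_qform_eq:
  assumes "finite S" "symm_on S P" "symm_on S P'" "\<And>c. qform S P c = qform S P' c"
    and "I \<in> S" "J \<in> S"
  shows "P I J = P' I J"
proof -
  have "symm_on S (\<lambda>I J. P I J - P' I J)" using assms(2,3) by (simp add: symm_on_def)
  from symm_on_entry_le_of_qform_le[OF assms(1) this, of 0] assms(4-6)
  show ?thesis by (simp add: qform_diff)
qed

lemma psd_on_column_bound:
  assumes "finite S" "symm_on S P" "psd_on S P" "I0 \<in> S"
  shows "(\<Sum>I\<in>S. d I * P I I0)\<^sup>2 \<le> qform S P d * P I0 I0"
  using bform_Cauchy_Schwarz[OF assms(2,3), of d "basis_vec I0"] assms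
  by (simp add: bform_basis_vec_right qform_basis_vec)

lemma nondegenerate_qform_ge_diag:
  fixes pb :: "'i \<Rightarrow> ('a \<Rightarrow> real) \<Rightarrow> ('a \<Rightarrow> real)"
  assumes S: "finite S" and P: "symm_on S P" "psd_on S P" and I0: "I0 \<in> S" and g: "0 \<le> g"
    and ND: "\<forall>c e. \<exists>i\<in>T. g * sqrt (sqnorm S c) * sqrt (sqnorm S e) \<le> \<bar>\<Sum>I\<in>S. pb i c I * e I\<bar>"
  shows "\<exists>i\<in>T. g\<^sup>2 * sqnorm S c * P I0 I0 \<le> qform S P (pb i c)"
proof -
  define m and p where "m = P I0 I0" and "p = (\<lambda>J. P J I0)"
  obtain i where i: "i \<in> T" "g * sqrt (sqnorm S c) * sqrt (sqnorm S p) \<le> \<bar>\<Sum>I\<in>S. pb i c I * p I\<bar>"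
    using ND by blast
  have "g\<^sup>2 * sqnorm S c * m \<le> qform S P (pb i c)"
  proof (cases "m = 0")
    case True
    thus ?thesis using P(2) by (simp add: psd_on_def)
  next
    case False
    hence mpos: "0 < m" using psd_on_diag_nonneg[OF P(2) S I0] by (simp add: m_def)
    have "m\<^sup>2 \<le> sqnorm S p" using sq_le_sqnorm[OF S I0, of p] by (simp add: p_def m_def)
    hence "g\<^sup>2 * sqnorm S c * m\<^sup>2 \<le> g\<^sup>2 * sqnorm S c * sqnorm S p"
      using sqnorm_nonneg[of S c] by (intro mult_left_mono) auto
    also have "\<dots> = (g * sqrt (sqnorm S c) * sqrt (sqnorm S p))\<^sup>2"
      by (simp add: power_mult_distrib sqnorm_nonneg)
    also have "\<dots> \<le> (\<Sum>I\<in>S. pb i c I * p I)\<^sup>2"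
      using power_mono[OF i(2), of 2] g by (simp add: sqnorm_nonneg)
    also have "\<dots> \<le> qform S P (pb i c) * m"
      using psd_on_column_bound[OF S P I0] by (simp add: p_def m_def)
    finally show ?thesis using mpos by (simp add: power2_eq_square mult.assoc[symmetric])
  qed
  thus ?thesis using i(1) by (auto simp: m_def)
qed

text \<open>The Doeblin-type lower bound behind \<open>(ND\<^sub>q)\<close>: test the nondegeneracy against the column
  of \<open>P\<close> through its largest diagonal entry.\<close>

lemma nondegenerate_sum_qform_ge:
  fixes pb :: "'i \<Rightarrow> ('a \<Rightarrow> real) \<Rightarrow> ('a \<Rightarrow> real)"
  assumes S: "finite S" "S \<noteq> {}" and T: "finite T"
    and P: "symm_on S P" "psd_on S P" and g: "0 \<le> g"
    and ND: "\<forall>c e. \<exists>i\<in>T. g * sqrt (sqnorm S c) * sqrt (sqnorm S e) \<le> \<bar>\<Sum>I\<in>S. pb i c I * e I\<bar>"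
  shows "g\<^sup>2 / real (card S) * trace_on S P * sqnorm S c \<le> (\<Sum>i\<in>T. qform S P (pb i c))"
proof -
  obtain I0 where I0: "I0 \<in> S" "\<And>I. I \<in> S \<Longrightarrow> P I I \<le> P I0 I0"
  proof -
    have "Max ((\<lambda>I. P I I) ` S) \<in> (\<lambda>I. P I I) ` S" using S by (intro Max_in) auto
    then obtain I0 where "I0 \<in> S" "P I0 I0 = Max ((\<lambda>I. P I I) ` S)" by auto
    thus ?thesis using that S by auto
  qed
  obtain i where i: "i \<in> T" "g\<^sup>2 * sqnorm S c * P I0 I0 \<le> qform S P (pb i c)"
    using nondegenerate_qform_ge_diag[OF S(1) P I0(1) g ND] by blast
  have "trace_on S P \<le> real (card S) * P I0 I0"
    unfolding trace_on_def using sum_bounded_above[of S "\<lambda>I. P I I" "P I0 I0"] I0 by auto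
  hence "g\<^sup>2 / real (card S) * trace_on S P * sqnorm S c
      \<le> g\<^sup>2 / real (card S) * (real (card S) * P I0 I0) * sqnorm S c"
    using sqnorm_nonneg[of S c] by (intro mult_left_mono mult_right_mono) auto
  also have "\<dots> = g\<^sup>2 * sqnorm S c * P I0 I0" using S by simp
  also have "\<dots> \<le> qform S P (pb i c)" by (rule i(2))
  also have "\<dots> \<le> (\<Sum>i\<in>T. qform S P (pb i c))"
    using i(1) T P(2) by (intro member_le_sum) (auto simp: psd_on_def)
  finally show ?thesis .
qed

lemma qform_scale_vec: "qform S P (\<lambda>I. r * c I) = r\<^sup>2 * qform S P c"
  unfolding qform_def by (simp add: sum_distrib_left power2_eq_square mult_ac)

lemma sqnorm_scale_vec: "sqnorm S (\<lambda>I. r * c I) = r\<^sup>2 * sqnorm S c"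
  unfolding sqnorm_def by (simp add: sum_distrib_left power_mult_distrib)

lemma compact_sqnorm_sphere:
  "compact (PiE UNIV (\<lambda>_. {-1..1::real}) \<inter> {c::'a \<Rightarrow> real. sqnorm S c = 1})"
proof -
  have "compactin (product_topology (\<lambda>_. euclidean) UNIV) (PiE UNIV (\<lambda>_::'a. {-1..1::real}))"
    by (subst compactin_PiE) auto
  hence "compact (PiE UNIV (\<lambda>_::'a. {-1..1::real}))" by (simp add: euclidean_product_topology)
  moreover have "closed {c::'a \<Rightarrow> real. sqnorm S c = 1}" unfolding sqnorm_def
    by (intro closed_Collect_eq continuous_intros continuous_on_product_coordinates)
  ultimately show ?thesis by (rule compact_Int_closed)
qed

lemma qform_lower_bound_of_sphere:
  assumes S: "finite S"
    and sphere: "\<And>c. c \<in> PiE UNIV (\<lambda>_. {-1..1}) \<inter> {c. sqnorm S c = 1} \<Longrightarrow> a \<le> qform S P c"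
  shows "a * sqnorm S c \<le> qform S P c"
proof (cases "sqnorm S c = 0")
  case True
  have "qform S P c = qform S P (\<lambda>_. 0)" using sqnorm_eq_0_imp[OF S True] by (intro qform_cong) auto
  thus ?thesis using True by (simp add: qform_def)
next
  case False
  hence np: "sqnorm S c > 0" using sqnorm_nonneg[of S c] by simp
  define r where "r = 1 / sqrt (sqnorm S c)"
  have r2: "r\<^sup>2 * sqnorm S c = 1" using np by (simp add: r_def power_divide)
  define c' where "c' = (\<lambda>I. if I \<in> S then r * c I else 0)"
  have c'S: "sqnorm S c' = 1" "qform S P c' = r\<^sup>2 * qform S P c"
    using r2 sqnorm_scale_vec[of S r c] qform_scale_vec[of S P r c]
      sqnorm_cong[of S c' "\<lambda>I. r * c I"] qform_cong[of S c' "\<lambda>I. r * c I"] by (auto simp: c'_def)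
  have "\<bar>c' I\<bar> \<le> 1" for I
    using sq_le_sqnorm[OF S, of I c'] c'S(1) abs_le_square_iff[of "c' I" 1]
    by (cases "I \<in> S") (auto simp: c'_def)
  hence "a \<le> r\<^sup>2 * qform S P c" using sphere[of c'] c'S by (auto simp: PiE_iff abs_le_iff)
  hence "a * sqnorm S c \<le> r\<^sup>2 * sqnorm S c * qform S P c"
    using np by (simp add: mult_right_mono mult_ac)
  thus ?thesis using r2 by simp
qed

lemma qform_coercive:
  assumes S: "finite S" and pd: "\<And>c. (\<exists>I\<in>S. c I \<noteq> 0) \<Longrightarrow> qform S P c > 0"
  shows "\<exists>\<epsilon>>0. \<forall>c. \<epsilon> * sqnorm S c \<le> qform S P c"
proof (cases "S = {}")
  case True thus ?thesis by (intro exI[of _ 1]) (simp add: qform_def sqnorm_def)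
next
  case False
  then obtain I0 where I0: "I0 \<in> S" by blast
  define T where "T = PiE UNIV (\<lambda>_. {-1..1::real}) \<inter> {c. sqnorm S c = 1}"
  have "basis_vec I0 \<in> T" using sqnorm_basis_vec[OF S I0] by (auto simp: T_def PiE_iff basis_vec_def)
  moreover have "continuous_on UNIV (qform S P)" unfolding qform_def
    by (intro continuous_intros continuous_on_product_coordinates)
  ultimately obtain v where v: "v \<in> T" "\<And>c. c \<in> T \<Longrightarrow> qform S P v \<le> qform S P c"
    using continuous_attains_inf[OF compact_sqnorm_sphere[of S, folded T_def]]
    by (metis continuous_on_subset empty_iff subset_UNIV)
  have "\<exists>I\<in>S. v I \<noteq> 0"
  proof (rule ccontr)
    assume "\<not> (\<exists>I\<in>S. v I \<noteq> 0)"
    hence "sqnorm S v = 0" by (simp add: sqnorm_def)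
    thus False using v(1) by (simp add: T_def)
  qed
  hence "qform S P v > 0" by (rule pd)
  moreover have "qform S P v * sqnorm S c \<le> qform S P c" for c
    using qform_lower_bound_of_sphere[OF S v(2)[unfolded T_def]] .
  ultimately show ?thesis by blast
qed

section \<open>Pointwise cluster points\<close>

lemma bounded_pointwise_cluster_point:
  fixes f :: "nat \<Rightarrow> 'z \<Rightarrow> real" and B :: "'z \<Rightarrow> real"
  assumes bnd: "\<And>n z. \<bar>f n z\<bar> \<le> B z"
  shows "\<exists>H. \<forall>Z. finite Z \<longrightarrow> (\<forall>\<epsilon>>0. \<forall>N0. \<exists>n\<ge>N0. \<forall>z\<in>Z. \<bar>f n z - H z\<bar> < \<epsilon>)"
proof -
  define K where "K = PiE UNIV (\<lambda>z. {-B z..B z})"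
  have "compactin (product_topology (\<lambda>i. euclidean) UNIV) K"
    unfolding K_def by (subst compactin_PiE) auto
  hence cK: "compact K" by (simp add: euclidean_product_topology)
  define F where "F = filtermap f sequentially"
  have Fnb: "F \<noteq> bot" unfolding F_def by (simp add: filtermap_bot_iff)
  have "- B z \<le> f n z \<and> f n z \<le> B z" for n z using bnd[of n z] by linarith
  hence "eventually (\<lambda>x. x \<in> K) F" unfolding F_def eventually_filtermap
    by (intro always_eventually allI) (auto simp: K_def PiE_iff)
  then obtain H where H: "inf (nhds H) F \<noteq> bot"
    using cK Fnb unfolding compact_filter by blast
  show ?thesis
  proof (intro exI[of _ H] allI impI)
    fix Z :: "'z set" and \<epsilon> :: real and N0 assume Z: "finite Z" "\<epsilon> > 0"
    show "\<exists>n\<ge>N0. \<forall>z\<in>Z. \<bar>f n z - H z\<bar> < \<epsilon>"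
    proof (rule ccontr)
      assume nn: "\<not> ?thesis"
      have o: "open {g. \<forall>z\<in>Z. g (id z) \<in> ball (H z) \<epsilon>}"
        by (rule product_topology_basis') (use Z in auto)
      have "eventually (\<lambda>g. \<forall>z\<in>Z. g (id z) \<in> ball (H z) \<epsilon>) (nhds H)"
        using eventually_nhds_in_open[OF o, of H] Z by auto
      moreover have "eventually (\<lambda>g. \<not> (\<forall>z\<in>Z. g (id z) \<in> ball (H z) \<epsilon>)) F"
        unfolding F_def eventually_filtermap eventually_sequentially
        using nn by (intro exI[of _ N0]) (auto simp: dist_real_def abs_minus_commute)
      ultimately have "eventually (\<lambda>_. False) (inf (nhds H) F)"
        unfolding eventually_inf by blast
      thus False using H by (simp add: eventually_False)
    qed
  qed
qed

section \<open>The symbolic space\<close>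

lemma dgam_self [simp]: "dgam g x x = 0"
  by (simp add: dgam_def)

lemma dgam_nonneg: "0 < g \<Longrightarrow> 0 \<le> dgam g x y"
  by (simp add: dgam_def)

lemma dgam_le_1: "0 < g \<Longrightarrow> g < 1 \<Longrightarrow> dgam g x y \<le> 1"
  by (simp add: dgam_def power_le_one)

lemma dgam_commute: "dgam g x y = dgam g y x"
  unfolding dgam_def by (simp add: eq_commute)

lemma dgam_scons: "dgam g (scons i x) (scons i y) = g * dgam g x y"
proof (cases "x = y")
  case True thus ?thesis by simp
next
  case False
  then obtain k where k: "x k \<noteq> y k" by auto
  have ne: "scons i x \<noteq> scons i y" using k unfolding scons_def by (metis nat.simps(5))
  have "(LEAST n. scons i x n \<noteq> scons i y n) = Suc (LEAST m. scons i x (Suc m) \<noteq> scons i y (Suc m))"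
    by (rule Least_Suc[of _ "Suc k"]) (use k in \<open>auto simp: scons_def\<close>)
  also have "(\<lambda>m. scons i x (Suc m) \<noteq> scons i y (Suc m)) = (\<lambda>m. x m \<noteq> y m)"
    by (simp add: scons_def)
  finally show ?thesis using False ne by (simp add: dgam_def)
qed

lemma dgam_le_if_prefix_eq:
  assumes "0 < g" "g \<le> 1" "\<forall>k<n. x k = y k"
  shows "dgam g x y \<le> g ^ n"
proof (cases "x = y")
  case True thus ?thesis using assms by simp
next
  case False
  then obtain k where k: "x k \<noteq> y k" by auto
  have "x (LEAST k. x k \<noteq> y k) \<noteq> y (LEAST k. x k \<noteq> y k)" using k by (rule LeastI)
  hence "n \<le> (LEAST k. x k \<noteq> y k)" using assms(3) by (meson not_le)
  thus ?thesis using False assms by (simp add: dgam_def power_decreasing)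
qed

lemma scons_in_Sigma_sp: "x \<in> Sigma_sp t \<Longrightarrow> i < t \<Longrightarrow> scons i x \<in> Sigma_sp t"
  by (auto simp: Sigma_sp_def scons_def split: nat.split)

lemma fan_theorem:
  assumes step: "\<And>w. (\<forall>i<t. w @ [i] \<in> G) \<Longrightarrow> w \<in> G"
    and bar: "\<forall>x\<in>Sigma_sp t. \<exists>n. map x [0..<n] \<in> G"
  shows "[] \<in> G"
proof (rule ccontr)
  assume e: "[] \<notin> G"
  define nxt where "nxt w = (SOME i. i < t \<and> w @ [i] \<notin> G)" for w
  have nxt: "w \<notin> G \<Longrightarrow> nxt w < t \<and> w @ [nxt w] \<notin> G" for w
    unfolding nxt_def by (rule someI_ex) (use step in blast)
  define ws where "ws = rec_nat [] (\<lambda>n w. w @ [nxt w])"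
  have ws0: "ws 0 = []" and wsS: "ws (Suc n) = ws n @ [nxt (ws n)]" for n
    by (simp_all add: ws_def)
  have notG: "ws n \<notin> G" for n by (induction n) (use e nxt in \<open>auto simp: ws0 wsS\<close>)
  define x where "x k = nxt (ws k)" for k
  have "x \<in> Sigma_sp t" unfolding Sigma_sp_def x_def using nxt notG by blast
  moreover have "ws n = map x [0..<n]" for n by (induction n) (auto simp: ws0 wsS x_def)
  ultimately show False using bar notG by metis
qed

text \<open>This replaces the compactness of \<open>\<Sigma>\<close>.\<close>

lemma uniform_of_cylinder_local:
  fixes Prop :: "real \<Rightarrow> (nat \<Rightarrow> nat) \<Rightarrow> bool"
  assumes local: "\<forall>x\<in>Sigma_sp t. \<exists>n \<epsilon>. \<epsilon> > 0 \<and> (\<forall>y\<in>Sigma_sp t. (\<forall>k<n. y k = x k) \<longrightarrow> Prop \<epsilon> y)"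
    and mono: "\<And>\<epsilon> \<epsilon>' y. 0 < \<epsilon>' \<Longrightarrow> \<epsilon>' \<le> \<epsilon> \<Longrightarrow> Prop \<epsilon> y \<Longrightarrow> Prop \<epsilon>' y"
  shows "\<exists>\<epsilon>>0. \<forall>y\<in>Sigma_sp t. Prop \<epsilon> y"
proof -
  define G where "G = {w. \<exists>\<epsilon>>0. \<forall>y\<in>Sigma_sp t. map y [0..<length w] = w \<longrightarrow> Prop \<epsilon> y}"
  have "[] \<in> G"
  proof (rule fan_theorem[of t])
    fix w assume all: "\<forall>i<t. w @ [i] \<in> G"
    then obtain e where e: "\<forall>i<t. e i > 0 \<and>
        (\<forall>y\<in>Sigma_sp t. map y [0..<Suc (length w)] = w @ [i] \<longrightarrow> Prop (e i) y)"
      unfolding G_def by simp metis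
    define \<epsilon> where "\<epsilon> = Min (insert 1 (e ` {..<t}))"
    have epos: "\<epsilon> > 0" unfolding \<epsilon>_def using e by (subst Min_gr_iff) auto
    have ele: "i < t \<Longrightarrow> \<epsilon> \<le> e i" for i unfolding \<epsilon>_def by (intro Min_le) auto
    show "w \<in> G" unfolding G_def
    proof (intro CollectI exI[of _ \<epsilon>] conjI epos ballI impI)
      fix y assume y: "y \<in> Sigma_sp t" "map y [0..<length w] = w"
      have yt: "y (length w) < t" using y(1) by (simp add: Sigma_sp_def)
      have "map y [0..<Suc (length w)] = w @ [y (length w)]" using y(2) by simp
      hence "Prop (e (y (length w))) y" using e yt y(1) by blast
      thus "Prop \<epsilon> y" using mono[OF epos ele[OF yt]] by blast
    qed
  next
    show "\<forall>x\<in>Sigma_sp t. \<exists>n. map x [0..<n] \<in> G"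
    proof
      fix x assume "x \<in> Sigma_sp t"
      then obtain n \<epsilon> where ne: "\<epsilon> > 0" "\<forall>y\<in>Sigma_sp t. (\<forall>k<n. y k = x k) \<longrightarrow> Prop \<epsilon> y"
        using local by blast
      have "\<forall>y\<in>Sigma_sp t. map y [0..<n] = map x [0..<n] \<longrightarrow> Prop \<epsilon> y"
        using ne(2) by simp
      hence "map x [0..<n] \<in> G" unfolding G_def using ne(1) by auto
      thus "\<exists>n. map x [0..<n] \<in> G" by blast
    qed
  qed
  thus ?thesis unfolding G_def by simp
qed

locale holder_space =
  fixes t :: nat and \<gamma> \<alpha> :: real
  assumes gamma: "0 < \<gamma>" "\<gamma> < 1" and alpha: "0 < \<alpha>"
begin

abbreviation "\<Sigma> \<equiv> Sigma_sp t"

lemma gamma_powr_bounds: "0 < \<gamma> powr \<alpha>" "\<gamma> powr \<alpha> < 1"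
  using gamma alpha powr_less_mono2[of \<alpha> \<gamma> 1] by auto

lemma dgam_powr_le_1: "dgam \<gamma> x y powr \<alpha> \<le> 1"
  using dgam_nonneg[OF gamma(1)] dgam_le_1[OF gamma] alpha by (intro powr_le1) auto

lemma dgam_powr_scons: "dgam \<gamma> (scons i x) (scons i y) powr \<alpha> = \<gamma> powr \<alpha> * dgam \<gamma> x y powr \<alpha>"
  using gamma dgam_nonneg[OF gamma(1)] by (simp add: dgam_scons powr_mult)

lemma dgam_powr_le_if_prefix_eq:
  assumes "\<forall>k<n. x k = y k"
  shows "dgam \<gamma> x y powr \<alpha> \<le> (\<gamma> powr \<alpha>) ^ n"
proof -
  have "dgam \<gamma> x y powr \<alpha> \<le> (\<gamma> ^ n) powr \<alpha>"
    using dgam_le_if_prefix_eq[of \<gamma> n x y] assms gamma alpha dgam_nonneg[OF gamma(1)]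
    by (intro powr_mono2) auto
  thus ?thesis using gamma by (simp add: powr_realpow[symmetric] powr_powr powr_power mult.commute)
qed

lemma holder_nonneg_const:
  assumes "holder t \<gamma> \<alpha> W"
  obtains C where "0 \<le> C" "\<forall>x\<in>\<Sigma>. \<forall>y\<in>\<Sigma>. \<bar>W x - W y\<bar> \<le> C * dgam \<gamma> x y powr \<alpha>"
proof -
  obtain C where C: "\<forall>x\<in>\<Sigma>. \<forall>y\<in>\<Sigma>. \<bar>W x - W y\<bar> \<le> C * dgam \<gamma> x y powr \<alpha>"
    using assms unfolding holder_def by blast
  have "\<forall>x\<in>\<Sigma>. \<forall>y\<in>\<Sigma>. \<bar>W x - W y\<bar> \<le> max C 0 * dgam \<gamma> x y powr \<alpha>"
    using C by (meson max.cobounded1 mult_right_mono order_trans powr_ge_zero)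
  thus ?thesis using that[of "max C 0"] by simp
qed

lemma holder_scale: "holder t \<gamma> \<alpha> W \<Longrightarrow> holder t \<gamma> \<alpha> (\<lambda>x. a * W x)"
  unfolding holder_def
  by (metis (no_types, opaque_lifting) abs_mult abs_ge_zero mult.assoc mult_left_mono
      right_diff_distrib)

lemma holder_bounded:
  assumes "holder t \<gamma> \<alpha> W"
  shows "\<exists>M. \<forall>y\<in>\<Sigma>. \<bar>W y\<bar> \<le> M"
proof (cases "\<Sigma> = {}")
  case False
  then obtain x0 where x0: "x0 \<in> \<Sigma>" by blast
  obtain C where C: "0 \<le> C" "\<forall>x\<in>\<Sigma>. \<forall>y\<in>\<Sigma>. \<bar>W x - W y\<bar> \<le> C * dgam \<gamma> x y powr \<alpha>"
    using holder_nonneg_const[OF assms] by blast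
  have "\<bar>W y\<bar> \<le> \<bar>W x0\<bar> + C" if "y \<in> \<Sigma>" for y
    using C(2) x0 that mult_left_le[OF dgam_powr_le_1 C(1), of x0 y] by fastforce
  thus ?thesis by blast
qed simp

lemma holder_pos_bounded_below:
  assumes W: "holder t \<gamma> \<alpha> W" and pos: "\<forall>x\<in>\<Sigma>. W x > 0"
  shows "\<exists>m>0. \<forall>y\<in>\<Sigma>. m \<le> W y"
proof (rule uniform_of_cylinder_local)
  obtain C where C: "0 \<le> C" "\<forall>x\<in>\<Sigma>. \<forall>y\<in>\<Sigma>. \<bar>W x - W y\<bar> \<le> C * dgam \<gamma> x y powr \<alpha>"
    using holder_nonneg_const[OF W] by blast
  show "\<forall>x\<in>\<Sigma>. \<exists>n \<epsilon>. \<epsilon> > 0 \<and> (\<forall>y\<in>\<Sigma>. (\<forall>k<n. y k = x k) \<longrightarrow> \<epsilon> \<le> W y)"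
  proof
    fix x assume x: "x \<in> \<Sigma>"
    have Wx: "W x > 0" using pos x by blast
    obtain n where n: "(\<gamma> powr \<alpha>) ^ n < W x / (2 * (C + 1))"
      using real_arch_pow_inv[of "W x / (2 * (C + 1))"] gamma_powr_bounds Wx C(1) by auto
    have "W x / 2 \<le> W y" if y: "y \<in> \<Sigma>" "\<forall>k<n. y k = x k" for y
    proof -
      have "dgam \<gamma> x y powr \<alpha> \<le> W x / (2 * (C + 1))"
        using dgam_powr_le_if_prefix_eq[of n x y] y(2) n by simp
      hence "C * dgam \<gamma> x y powr \<alpha> \<le> C * (W x / (2 * (C + 1)))" using C(1) by (rule mult_left_mono)
      also have "\<dots> \<le> W x / 2" using C(1) Wx by (simp add: field_simps)
      finally show ?thesis using C(2) x y(1) by fastforce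
    qed
    thus "\<exists>n \<epsilon>. \<epsilon> > 0 \<and> (\<forall>y\<in>\<Sigma>. (\<forall>k<n. y k = x k) \<longrightarrow> \<epsilon> \<le> W y)"
      using Wx by (intro exI[of _ n] exI[of _ "W x / 2"]) auto
  qed
qed auto

end

section \<open>The Ruelle operator on quadratic forms\<close>

lemma qidx_nonempty: "q \<le> CARD('n::{finite,linorder}) \<Longrightarrow> (qidx q :: 'n set set) \<noteq> {}"
  unfolding qidx_def using obtain_subset_with_card_n[of q "UNIV :: 'n set"] by auto

lemma normq_eq_sqrt_sqnorm: "normq q c = sqrt (sqnorm (qidx q) c)"
  by (simp add: normq_def ipq_def sqnorm_def power2_eq_square)

lemma posdef_iff_qform:
  "posdef q P \<longleftrightarrow> (\<forall>c. (\<exists>I\<in>qidx q. c I \<noteq> 0) \<longrightarrow> qform (qidx q) P c > 0)"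
  by (simp add: posdef_def qform_def)

lemma posdef_imp_psd_on: "posdef q P \<Longrightarrow> psd_on (qidx q) P"
  unfolding psd_on_def posdef_iff_qform
proof (intro allI)
  fix c assume pd: "\<forall>c. (\<exists>I\<in>qidx q. c I \<noteq> 0) \<longrightarrow> 0 < qform (qidx q) P c"
  show "0 \<le> qform (qidx q) P c"
  proof (cases "\<exists>I\<in>qidx q. c I \<noteq> 0")
    case False
    hence "qform (qidx q) P c = qform (qidx q) P (\<lambda>_. 0)" by (intro qform_cong) auto
    thus ?thesis by (simp add: qform_def)
  qed (use pd in \<open>auto intro: less_imp_le\<close>)
qed

lemma qform_Psi_op:
  fixes L :: "real^('n::{finite,linorder})^('n::{finite,linorder})"
  shows "qform (qidx q) (Psi_op L q B) c = qform (qidx q) B (pullback L q c)"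
proof -
  let ?S = "qidx q"
  let ?m = "minor L q"
  have "qform ?S (Psi_op L q B) c
      = (\<Sum>K\<in>?S. \<Sum>K'\<in>?S. \<Sum>J\<in>?S. \<Sum>J'\<in>?S. c K * ?m K J * B J J' * ?m K' J' * c K')"
    unfolding qform_def Psi_op_def by (simp add: sum_distrib_left sum_distrib_right mult_ac)
  also have "\<dots> = (\<Sum>K\<in>?S. \<Sum>J\<in>?S. \<Sum>K'\<in>?S. \<Sum>J'\<in>?S. c K * ?m K J * B J J' * ?m K' J' * c K')"
    by (intro sum.cong refl sum.swap)
  also have "\<dots> = (\<Sum>J\<in>?S. \<Sum>K\<in>?S. \<Sum>K'\<in>?S. \<Sum>J'\<in>?S. c K * ?m K J * B J J' * ?m K' J' * c K')"
    by (rule sum.swap)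
  also have "\<dots> = (\<Sum>J\<in>?S. \<Sum>K\<in>?S. \<Sum>J'\<in>?S. \<Sum>K'\<in>?S. c K * ?m K J * B J J' * ?m K' J' * c K')"
    by (intro sum.cong refl sum.swap)
  also have "\<dots> = (\<Sum>J\<in>?S. \<Sum>J'\<in>?S. \<Sum>K\<in>?S. \<Sum>K'\<in>?S. c K * ?m K J * B J J' * ?m K' J' * c K')"
    by (intro sum.cong refl sum.swap)
  also have "\<dots> = qform ?S B (pullback L q c)"
    unfolding qform_def pullback_def by (simp add: sum_distrib_left sum_distrib_right mult_ac)
  finally show ?thesis .
qed

lemma qform_ruelle:
  "qform (qidx q) (ruelle t \<psi> q W A x) c =
     (\<Sum>i<t. exp (W (scons i x)) * qform (qidx q) (A (scons i x)) (pullback (Dlin (\<psi> i)) q c))"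
proof -
  have "qform (qidx q) (ruelle t \<psi> q W A x) c = (\<Sum>i<t. qform (qidx q)
      (\<lambda>K K'. exp (W (scons i x)) * Psi_op (Dlin (\<psi> i)) q (A (scons i x)) K K') c)"
    unfolding ruelle_def by (rule qform_sum)
  thus ?thesis by (simp add: qform_scale qform_Psi_op)
qed

lemma symm_on_Psi_op:
  fixes L :: "real^('n::{finite,linorder})^('n::{finite,linorder})"
  assumes "symm_on (qidx q) B"
  shows "symm_on (qidx q) (Psi_op L q B)"
  unfolding symm_on_def Psi_op_def
proof (intro ballI)
  fix K K' :: "'n set" assume "K \<in> qidx q" "K' \<in> qidx q"
  have "(\<Sum>J\<in>qidx q. \<Sum>J'\<in>qidx q. minor L q K J * B J J' * minor L q K' J') =
        (\<Sum>J'\<in>qidx q. \<Sum>J\<in>qidx q. minor L q K J * B J J' * minor L q K' J')"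
    by (rule sum.swap)
  also have "\<dots> = (\<Sum>J'\<in>qidx q. \<Sum>J\<in>qidx q. minor L q K' J' * B J' J * minor L q K J)"
    using assms unfolding symm_on_def by (intro sum.cong refl) (auto simp: mult_ac)
  finally show "(\<Sum>J\<in>qidx q. \<Sum>J'\<in>qidx q. minor L q K J * B J J' * minor L q K' J') =
      (\<Sum>J\<in>qidx q. \<Sum>J'\<in>qidx q. minor L q K' J * B J J' * minor L q K J')" .
qed

lemma symm_on_ruelle:
  assumes "\<forall>i<t. symm_on (qidx q) (A (scons i x))"
  shows "symm_on (qidx q) (ruelle t \<psi> q W A x)"
proof -
  have "\<forall>i<t. symm_on (qidx q) (Psi_op (Dlin (\<psi> i)) q (A (scons i x)))"
    using assms symm_on_Psi_op by blast
  thus ?thesis unfolding symm_on_def ruelle_def by (auto intro!: sum.cong)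
qed

locale ruelle_setting = holder_space t \<gamma> \<alpha>
  for t :: nat and \<gamma> \<alpha> :: real +
  fixes \<psi> :: "nat \<Rightarrow> real^('n::{finite,linorder}) \<Rightarrow> real^('n::{finite,linorder})"
    and q :: nat and g :: real
  assumes qidx_nonempty: "(qidx q :: 'n set set) \<noteq> {}"
    and g_pos: "0 < g"
    and nondegenerate: "\<forall>c e :: 'n set \<Rightarrow> real. \<exists>i\<in>{..<t}.
      g * sqrt (sqnorm (qidx q) c) * sqrt (sqnorm (qidx q) e)
        \<le> \<bar>\<Sum>I\<in>qidx q. pullback (Dlin (\<psi> i)) q c I * e I\<bar>"
begin

abbreviation "Iq \<equiv> (qidx q :: 'n set set)"
abbreviation "R W A \<equiv> ruelle t \<psi> q W A"
abbreviation "pb i \<equiv> pullback (Dlin (\<psi> i)) q"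

definition base_point :: "nat \<Rightarrow> nat" where
  "base_point = (\<lambda>_. 0)"

lemma alphabet_nonempty: "0 < t"
  using nondegenerate by fastforce

lemma base_point_in_Sigma: "base_point \<in> \<Sigma>"
  using alphabet_nonempty by (simp add: base_point_def Sigma_sp_def)

lemma card_Iq_pos: "0 < real (card Iq)"
  using qidx_nonempty by (simp add: card_gt_0_iff)

definition pos_eigenpair ::
    "((nat \<Rightarrow> nat) \<Rightarrow> real) \<Rightarrow> real \<Rightarrow> ((nat \<Rightarrow> nat) \<Rightarrow> ('n set \<Rightarrow> 'n set \<Rightarrow> real)) \<Rightarrow> bool" where
  "pos_eigenpair W \<beta> A \<longleftrightarrow> \<beta> > 0 \<and> contM t \<gamma> q A \<and> (\<forall>x\<in>\<Sigma>. posdef q (A x)) \<and>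
      (\<forall>x\<in>\<Sigma>. \<forall>K\<in>Iq. \<forall>K'\<in>Iq. R W A x K K' = \<beta> * A x K K')"

lemma qform_pos_eigenpair:
  "pos_eigenpair W \<beta> A \<Longrightarrow> x \<in> \<Sigma> \<Longrightarrow> qform Iq (R W A x) c = \<beta> * qform Iq (A x) c"
  unfolding pos_eigenpair_def by (subst qform_scale[symmetric], intro qform_cong_matrix) auto

lemma contM_posdef_cylinder_bounds:
  assumes cA: "contM t \<gamma> q A" and pA: "\<forall>x\<in>\<Sigma>. posdef q (A x)" and x: "x \<in> \<Sigma>"
  shows "\<exists>n \<epsilon>. \<epsilon> > 0 \<and> (\<forall>y\<in>\<Sigma>. (\<forall>k<n. y k = x k) \<longrightarrow>
      (\<forall>c. \<epsilon> * sqnorm Iq c \<le> qform Iq (A y) c \<and> qform Iq (A y) c \<le> 1 / \<epsilon> * sqnorm Iq c))"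
proof -
  let ?N = "real (card Iq)"
  obtain e1 where e1: "e1 > 0" "\<And>c. e1 * sqnorm Iq c \<le> qform Iq (A x) c"
    using qform_coercive[of Iq "A x"] pA x by (auto simp: posdef_iff_qform)
  define M where "M = (\<Sum>I\<in>Iq. \<Sum>J\<in>Iq. \<bar>A x I J\<bar>)"
  have M0: "0 \<le> M" unfolding M_def by (intro sum_nonneg) auto
  have upper: "qform Iq (A x) c \<le> M * ?N * sqnorm Iq c" for c
    unfolding M_def by (rule qform_le_entry_sum) simp
  obtain \<delta> where \<delta>: "\<delta> > 0" "\<forall>y\<in>\<Sigma>. dgam \<gamma> x y < \<delta> \<longrightarrow> (\<forall>I J. \<bar>A y I J - A x I J\<bar> < e1 / (2 * ?N))"
  proof -
    have "e1 / (2 * ?N) > 0" using e1 card_Iq_pos by simp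
    thus ?thesis using cA x that unfolding contM_def by blast
  qed
  obtain n where n: "\<gamma> ^ n < \<delta>" using real_arch_pow_inv[OF \<delta>(1) gamma(2)] by blast
  define \<epsilon> where "\<epsilon> = min (e1 / 2) (1 / (M * ?N + e1 / 2))"
  have ep: "\<epsilon> > 0" using e1 M0 card_Iq_pos by (simp add: \<epsilon>_def add_nonneg_pos)
  have "\<epsilon> * sqnorm Iq c \<le> qform Iq (A y) c \<and> qform Iq (A y) c \<le> 1 / \<epsilon> * sqnorm Iq c"
    if y: "y \<in> \<Sigma>" "\<forall>k<n. y k = x k" for y c
  proof -
    have "dgam \<gamma> x y \<le> \<gamma> ^ n" using y(2) gamma by (intro dgam_le_if_prefix_eq) auto
    hence "\<forall>I J. \<bar>A y I J - A x I J\<bar> < e1 / (2 * ?N)" using \<delta>(2) y(1) n by simp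
    hence "\<forall>I\<in>Iq. \<forall>J\<in>Iq. \<bar>A y I J - A x I J\<bar> \<le> e1 / (2 * ?N)" by (simp add: less_imp_le)
    from qform_diff_le[OF _ this, of c]
    have d: "\<bar>qform Iq (A y) c - qform Iq (A x) c\<bar> \<le> e1 / 2 * sqnorm Iq c"
      using card_Iq_pos qidx_nonempty by simp
    have ns: "0 \<le> sqnorm Iq c" by (rule sqnorm_nonneg)
    have "\<epsilon> * sqnorm Iq c \<le> e1 / 2 * sqnorm Iq c" using ns by (intro mult_right_mono) (auto simp: \<epsilon>_def)
    also have "\<dots> \<le> qform Iq (A y) c" using d e1(2)[of c] abs_le_iff[of "qform Iq (A y) c - qform Iq (A x) c"] by linarith
    finally have lo: "\<epsilon> * sqnorm Iq c \<le> qform Iq (A y) c" .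
    have "qform Iq (A y) c \<le> M * ?N * sqnorm Iq c + e1 / 2 * sqnorm Iq c"
      using d upper[of c] abs_le_iff[of "qform Iq (A y) c - qform Iq (A x) c"] by linarith
    also have "\<dots> = (M * ?N + e1 / 2) * sqnorm Iq c" by (simp add: algebra_simps)
    also have "\<dots> \<le> 1 / \<epsilon> * sqnorm Iq c"
    proof (intro mult_right_mono ns)
      have "\<epsilon> \<le> 1 / (M * ?N + e1 / 2)" by (simp add: \<epsilon>_def)
      moreover have "0 < M * ?N + e1 / 2" using M0 card_Iq_pos e1 by (simp add: add_nonneg_pos)
      ultimately show "M * ?N + e1 / 2 \<le> 1 / \<epsilon>" using ep by (simp add: field_simps)
    qed
    finally show ?thesis using lo by simp
  qed
  thus ?thesis using ep by blast
qed

lemma contM_posdef_uniform_bounds: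
  assumes "contM t \<gamma> q A" "\<forall>x\<in>\<Sigma>. posdef q (A x)"
  shows "\<exists>\<epsilon>>0. \<forall>x\<in>\<Sigma>. \<forall>c. \<epsilon> * sqnorm Iq c \<le> qform Iq (A x) c \<and> qform Iq (A x) c \<le> 1 / \<epsilon> * sqnorm Iq c"
proof (rule uniform_of_cylinder_local)
  show "\<forall>x\<in>\<Sigma>. \<exists>n \<epsilon>. \<epsilon> > 0 \<and> (\<forall>y\<in>\<Sigma>. (\<forall>k<n. y k = x k) \<longrightarrow>
      (\<forall>c. \<epsilon> * sqnorm Iq c \<le> qform Iq (A y) c \<and> qform Iq (A y) c \<le> 1 / \<epsilon> * sqnorm Iq c))"
    using contM_posdef_cylinder_bounds[OF assms] by blast
next
  fix \<epsilon> \<epsilon>' :: real and y assume "0 < \<epsilon>'" "\<epsilon>' \<le> \<epsilon>"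
    and "\<forall>c. \<epsilon> * sqnorm Iq c \<le> qform Iq (A y) c \<and> qform Iq (A y) c \<le> 1 / \<epsilon> * sqnorm Iq c"
  moreover have "\<epsilon>' * sqnorm Iq c \<le> \<epsilon> * sqnorm Iq c" "1 / \<epsilon> * sqnorm Iq c \<le> 1 / \<epsilon>' * sqnorm Iq c" for c
    using calculation sqnorm_nonneg[of Iq c] by (simp_all add: mult_right_mono frac_le)
  ultimately show "\<forall>c. \<epsilon>' * sqnorm Iq c \<le> qform Iq (A y) c \<and> qform Iq (A y) c \<le> 1 / \<epsilon>' * sqnorm Iq c"
    by (meson order_trans)
qed

lemma qform_ruelle_iter_mono:
  assumes "\<forall>y\<in>\<Sigma>. \<forall>c. a * qform Iq (A y) c \<le> b * qform Iq (B y) c" "x \<in> \<Sigma>"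
  shows "a * qform Iq ((R W ^^ n) A x) c \<le> b * qform Iq ((R W ^^ n) B x) c"
  using assms(2)
proof (induction n arbitrary: x c)
  case 0 thus ?case using assms(1) by simp
next
  case (Suc n)
  have "a * qform Iq ((R W ^^ Suc n) A x) c
      = (\<Sum>i<t. exp (W (scons i x)) * (a * qform Iq ((R W ^^ n) A (scons i x)) (pb i c)))"
    by (simp add: qform_ruelle sum_distrib_left mult_ac)
  also have "\<dots> \<le> (\<Sum>i<t. exp (W (scons i x)) * (b * qform Iq ((R W ^^ n) B (scons i x)) (pb i c)))"
    using Suc scons_in_Sigma_sp by (intro sum_mono mult_left_mono) auto
  also have "\<dots> = b * qform Iq ((R W ^^ Suc n) B x) c"
    by (simp add: qform_ruelle sum_distrib_left mult_ac)
  finally show ?case .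
qed

lemma qform_ruelle_diff_le:
  assumes "\<And>i. i < t \<Longrightarrow>
    \<bar>qform Iq (A (scons i x)) (pb i c) - qform Iq (B (scons i x)) (pb i c)\<bar> \<le> \<epsilon>"
  shows "\<bar>qform Iq (R W A x) c - qform Iq (R W B x) c\<bar> \<le> (\<Sum>i<t. exp (W (scons i x))) * \<epsilon>"
proof -
  have "\<bar>qform Iq (R W A x) c - qform Iq (R W B x) c\<bar>
      \<le> (\<Sum>i<t. exp (W (scons i x)) *
          \<bar>qform Iq (A (scons i x)) (pb i c) - qform Iq (B (scons i x)) (pb i c)\<bar>)"
    unfolding qform_ruelle sum_subtractf[symmetric] right_diff_distrib[symmetric]
    by (rule order_trans[OF sum_abs]) (simp add: abs_mult)
  also have "\<dots> \<le> (\<Sum>i<t. exp (W (scons i x)) * \<epsilon>)"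
    using assms by (intro sum_mono mult_left_mono) auto
  finally show ?thesis by (simp add: sum_distrib_right)
qed

lemma pos_eigenpair_power_comparison:
  assumes e1: "pos_eigenpair W1 \<beta>1 A1" and e2: "pos_eigenpair W2 \<beta>2 A2"
    and W: "\<forall>x\<in>\<Sigma>. W1 x \<le> W2 x + \<delta>" and K: "0 \<le> K"
    and A: "\<And>y c. y \<in> \<Sigma> \<Longrightarrow> qform Iq (A1 y) c \<le> K * qform Iq (A2 y) c"
    and x: "x \<in> \<Sigma>"
  shows "\<beta>1 ^ n * qform Iq (A1 x) c \<le> K * (exp \<delta> * \<beta>2) ^ n * qform Iq (A2 x) c"
  using x
proof (induction n arbitrary: x c)
  case 0 thus ?case using A by simp
next
  case (Suc n)
  let ?K = "K * (exp \<delta> * \<beta>2) ^ n"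
  have psd1: "0 \<le> \<beta>1 ^ n * qform Iq (A1 y) c" if "y \<in> \<Sigma>" for y c
  proof -
    have "0 \<le> qform Iq (A1 y) c"
      using e1 that posdef_imp_psd_on unfolding pos_eigenpair_def psd_on_def by blast
    thus ?thesis using e1 by (simp add: pos_eigenpair_def)
  qed
  have "\<beta>1 ^ Suc n * qform Iq (A1 x) c = \<beta>1 ^ n * qform Iq (R W1 A1 x) c"
    using qform_pos_eigenpair[OF e1 Suc.prems] by simp
  also have "\<dots> = (\<Sum>i<t. exp (W1 (scons i x)) * (\<beta>1 ^ n * qform Iq (A1 (scons i x)) (pb i c)))"
    by (simp add: qform_ruelle sum_distrib_left mult_ac)
  also have "\<dots> \<le> (\<Sum>i<t. exp (W2 (scons i x) + \<delta>) * (?K * qform Iq (A2 (scons i x)) (pb i c)))"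
  proof (rule sum_mono, rule mult_mono)
    fix i assume "i \<in> {..<t}"
    hence i: "scons i x \<in> \<Sigma>" using Suc.prems scons_in_Sigma_sp by auto
    show "exp (W1 (scons i x)) \<le> exp (W2 (scons i x) + \<delta>)" using W i by simp
    show "\<beta>1 ^ n * qform Iq (A1 (scons i x)) (pb i c) \<le> ?K * qform Iq (A2 (scons i x)) (pb i c)"
      using Suc.IH[OF i] .
    show "0 \<le> \<beta>1 ^ n * qform Iq (A1 (scons i x)) (pb i c)" using psd1[OF i] .
  qed simp
  also have "\<dots> = ?K * exp \<delta> * qform Iq (R W2 A2 x) c"
    by (simp add: qform_ruelle sum_distrib_left exp_add mult_ac)
  also have "\<dots> = K * (exp \<delta> * \<beta>2) ^ Suc n * qform Iq (A2 x) c"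
    using qform_pos_eigenpair[OF e2 Suc.prems] by (simp add: mult_ac)
  finally show ?case .
qed

lemma pos_eigenvalue_comparison:
  assumes e1: "pos_eigenpair W1 \<beta>1 A1" and e2: "pos_eigenpair W2 \<beta>2 A2"
    and W: "\<forall>x\<in>\<Sigma>. W1 x \<le> W2 x + \<delta>"
  shows "\<beta>1 \<le> exp \<delta> * \<beta>2"
proof -
  obtain a1 where a1: "a1 > 0" "\<forall>x\<in>\<Sigma>. \<forall>c. a1 * sqnorm Iq c \<le> qform Iq (A1 x) c \<and> qform Iq (A1 x) c \<le> 1 / a1 * sqnorm Iq c"
    using contM_posdef_uniform_bounds[of A1] e1 by (auto simp: pos_eigenpair_def)
  obtain a2 where a2: "a2 > 0" "\<forall>x\<in>\<Sigma>. \<forall>c. a2 * sqnorm Iq c \<le> qform Iq (A2 x) c \<and> qform Iq (A2 x) c \<le> 1 / a2 * sqnorm Iq c"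
    using contM_posdef_uniform_bounds[of A2] e2 by (auto simp: pos_eigenpair_def)
  have b: "\<beta>1 > 0" "\<beta>2 > 0" using e1 e2 by (auto simp: pos_eigenpair_def)
  define K where "K = 1 / (a1 * a2)"
  have K: "0 \<le> K" using a1 a2 by (simp add: K_def)
  have A12: "qform Iq (A1 y) c \<le> K * qform Iq (A2 y) c" if "y \<in> \<Sigma>" for y c
  proof -
    have "qform Iq (A1 y) c \<le> 1 / a1 * sqnorm Iq c" using a1 that by blast
    also have "\<dots> \<le> 1 / a1 * (qform Iq (A2 y) c / a2)"
      using a1 a2 that by (intro mult_left_mono) (auto simp: field_simps)
    finally show ?thesis by (simp add: K_def)
  qed
  obtain I0 where I0: "I0 \<in> Iq" using qidx_nonempty by blast
  define x0 and c0 where "x0 = base_point" and "c0 = basis_vec I0"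
  have x0: "x0 \<in> \<Sigma>" using base_point_in_Sigma by (simp add: x0_def)
  have n1: "sqnorm Iq c0 = 1" using I0 by (simp add: c0_def sqnorm_basis_vec)
  have A1x0: "a1 \<le> qform Iq (A1 x0) c0" using a1(2)[rule_format, OF x0, of c0] n1 by simp
  have A2x0: "qform Iq (A2 x0) c0 \<le> 1 / a2" using a2(2)[rule_format, OF x0, of c0] n1 by simp
  define r where "r = \<beta>1 / (exp \<delta> * \<beta>2)"
  have "r ^ n \<le> K / (a1 * a2)" for n
  proof -
    have "\<beta>1 ^ n * a1 \<le> \<beta>1 ^ n * qform Iq (A1 x0) c0"
      using A1x0 b by (intro mult_left_mono) auto
    also have "\<dots> \<le> K * (exp \<delta> * \<beta>2) ^ n * qform Iq (A2 x0) c0"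
      by (rule pos_eigenpair_power_comparison[OF e1 e2 W K A12 x0])
    also have "\<dots> \<le> K * (exp \<delta> * \<beta>2) ^ n * (1 / a2)"
      using A2x0 K b by (intro mult_left_mono) auto
    finally have "\<beta>1 ^ n * a1 \<le> K * (exp \<delta> * \<beta>2) ^ n * (1 / a2)" .
    thus ?thesis using a1 a2 b by (simp add: r_def power_divide field_simps)
  qed
  hence "r \<le> 1" by (metis linorder_not_le real_arch_pow)
  thus ?thesis using b by (simp add: r_def field_simps)
qed

lemma betaW_eqI:
  assumes "pos_eigenpair W \<beta> A"
  shows "betaW t \<gamma> \<psi> q W = \<beta>"
  unfolding betaW_def
proof (rule the_equality)
  show "\<beta> > 0 \<and> (\<exists>A::(nat \<Rightarrow> nat) \<Rightarrow> ('n set \<Rightarrow> 'n set \<Rightarrow> real).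
      contM t \<gamma> q A \<and> (\<forall>x\<in>\<Sigma>. posdef q (A x)) \<and>
      (\<forall>x\<in>\<Sigma>. \<forall>K\<in>Iq. \<forall>K'\<in>Iq. R W A x K K' = \<beta> * A x K K'))"
    using assms unfolding pos_eigenpair_def by blast
next
  fix b assume "b > 0 \<and> (\<exists>A::(nat \<Rightarrow> nat) \<Rightarrow> ('n set \<Rightarrow> 'n set \<Rightarrow> real).
      contM t \<gamma> q A \<and> (\<forall>x\<in>\<Sigma>. posdef q (A x)) \<and>
      (\<forall>x\<in>\<Sigma>. \<forall>K\<in>Iq. \<forall>K'\<in>Iq. R W A x K K' = b * A x K K'))"
  then obtain A' where "pos_eigenpair W b A'" unfolding pos_eigenpair_def by blast
  from pos_eigenvalue_comparison[OF this assms, of 0] pos_eigenvalue_comparison[OF assms this, of 0]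
  show "b = \<beta>" by simp
qed

end

section \<open>Construction of a positive eigenfunction\<close>

lemma submultiplicative_power_le:
  fixes a :: "nat \<Rightarrow> real"
  assumes pos: "\<And>n. 0 < a n" and sub: "\<And>n m. a (n + m) \<le> a n * a m"
  shows "a (m * Suc n) \<le> a m ^ Suc n"
proof (induction n)
  case (Suc n)
  have "a (m * Suc (Suc n)) \<le> a m * a (m * Suc n)" using sub[of m "m * Suc n"] by simp
  also have "\<dots> \<le> a m * a m ^ Suc n" using Suc pos[of m] by (intro mult_left_mono) auto
  finally show ?case by simp
qed simp

lemma supermultiplicative_power_ge:
  fixes b :: "nat \<Rightarrow> real"
  assumes pos: "\<And>n. 0 < b n" and super: "\<And>n m. 1 \<le> n \<Longrightarrow> 1 \<le> m \<Longrightarrow> b n * b m \<le> b (n + m)"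
    and n: "1 \<le> n"
  shows "b n ^ Suc k \<le> b (n * Suc k)"
proof (induction k)
  case (Suc k)
  have "b n ^ Suc (Suc k) = b n * b n ^ Suc k" by simp
  also have "\<dots> \<le> b n * b (n * Suc k)" using Suc pos[of n] by (intro mult_left_mono) auto
  also have "\<dots> \<le> b (n + n * Suc k)" using n by (intro super) auto
  finally show ?case by (simp add: add.commute)
qed simp

lemma sub_supermultiplicative_power_le:
  fixes a b :: "nat \<Rightarrow> real"
  assumes pos: "\<And>n. 0 < a n" "\<And>n. 0 < b n"
    and sub: "\<And>n m. a (n + m) \<le> a n * a m"
    and super: "\<And>n m. 1 \<le> n \<Longrightarrow> 1 \<le> m \<Longrightarrow> b n * b m \<le> b (n + m)"
    and le: "\<And>n. 1 \<le> n \<Longrightarrow> b n \<le> a n"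
    and nm: "1 \<le> n" "1 \<le> m"
  shows "b n ^ m \<le> a m ^ n"
proof -
  obtain m' where m': "m = Suc m'" using nm(2) by (cases m) auto
  obtain n' where n': "n = Suc n'" using nm(1) by (cases n) auto
  have "b n ^ m \<le> b (n * m)"
    using supermultiplicative_power_ge[OF pos(2) super nm(1), of m'] by (simp only: m')
  also have "\<dots> \<le> a (n * m)" by (intro le) (simp add: m' n')
  also have "\<dots> = a (m * Suc n')" by (simp only: n' mult.commute)
  also have "\<dots> \<le> a m ^ n" using submultiplicative_power_le[OF pos(1) sub] by (simp only: n')
  finally show ?thesis .
qed

text \<open>A Fekete-type squeeze: the exponential growth rate of \<open>a\<close> is attained by the infimum of
  \<open>a\<^sub>m\<^sup>1\<^sup>/\<^sup>m\<close>, and \<open>b\<^sub>n \<le> a\<^sub>n\<close> pushes every \<open>b\<^sub>n\<^sup>1\<^sup>/\<^sup>n\<close> below it.\<close>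

lemma sub_supermultiplicative_growth_rate:
  fixes a b :: "nat \<Rightarrow> real"
  assumes pos: "\<And>n. 0 < a n" "\<And>n. 0 < b n"
    and sub: "\<And>n m. a (n + m) \<le> a n * a m"
    and super: "\<And>n m. 1 \<le> n \<Longrightarrow> 1 \<le> m \<Longrightarrow> b n * b m \<le> b (n + m)"
    and le: "\<And>n. 1 \<le> n \<Longrightarrow> b n \<le> a n"
  shows "\<exists>\<rho>>0. \<forall>n\<ge>1. b n \<le> \<rho> ^ n \<and> \<rho> ^ n \<le> a n"
proof -
  define \<rho> where "\<rho> = Inf ((\<lambda>m. root m (a m)) ` {1..})"
  have lower: "root n (b n) \<le> \<rho>" if n: "1 \<le> n" for n
    unfolding \<rho>_def
  proof (rule cInf_greatest)
    fix x assume "x \<in> (\<lambda>m. root m (a m)) ` {1..}"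
    then obtain m where m: "1 \<le> m" "x = root m (a m)" by auto
    have "root n (b n) = root (n * m) (b n ^ m)"
      using m n pos(2)[of n] by (simp add: real_root_mult_exp real_root_power_cancel)
    also have "\<dots> \<le> root (n * m) (a m ^ n)"
    proof (rule real_root_le_mono)
      show "b n ^ m \<le> a m ^ n"
        by (rule sub_supermultiplicative_power_le) (use pos sub super le n m(1) in auto)
    qed (use n m in simp)
    also have "\<dots> = root m (a m)"
      using m n pos(1)[of m] by (simp add: real_root_mult_exp real_root_power_cancel mult.commute[of n m])
    finally show "root n (b n) \<le> x" using m by simp
  qed auto
  have upper: "\<rho> \<le> root m (a m)" if "1 \<le> m" for m
    unfolding \<rho>_def
  proof (rule cInf_lower)
    show "root m (a m) \<in> (\<lambda>m. root m (a m)) ` {1..}" using that by auto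
    show "bdd_below ((\<lambda>m. root m (a m)) ` {1..})"
      using pos(1) by (intro bdd_belowI[of _ 0]) (auto intro: real_root_ge_zero less_imp_le)
  qed
  have \<rho>_pos: "0 < \<rho>" using lower[of 1] pos(2)[of 1] by simp
  have "b n \<le> \<rho> ^ n \<and> \<rho> ^ n \<le> a n" if n: "1 \<le> n" for n
  proof
    have "b n = root n (b n) ^ n" using n pos(2)[of n] by (simp add: real_root_pow_pos2)
    also have "\<dots> \<le> \<rho> ^ n"
      using lower[OF n] pos(2)[of n] by (intro power_mono) (auto intro: real_root_ge_zero less_imp_le)
    finally show "b n \<le> \<rho> ^ n" .
    have "\<rho> ^ n \<le> root n (a n) ^ n" using upper[OF n] \<rho>_pos by (intro power_mono) auto
    also have "\<dots> = a n" using n pos(1)[of n] by (simp add: real_root_pow_pos2)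
    finally show "\<rho> ^ n \<le> a n" .
  qed
  thus ?thesis using \<rho>_pos by blast
qed

locale ruelle_potential = ruelle_setting t \<gamma> \<alpha> \<psi> q g
  for t :: nat and \<gamma> \<alpha> :: real
    and \<psi> :: "nat \<Rightarrow> real^('n::{finite,linorder}) \<Rightarrow> real^('n::{finite,linorder})"
    and q :: nat and g :: real +
  fixes W :: "(nat \<Rightarrow> nat) \<Rightarrow> real" and CW :: real
  assumes CW_nonneg: "0 \<le> CW"
    and W_holder: "\<forall>x\<in>Sigma_sp t. \<forall>y\<in>Sigma_sp t. \<bar>W x - W y\<bar> \<le> CW * dgam \<gamma> x y powr \<alpha>"
begin

definition cone_const :: real where
  "cone_const = CW / (1 - \<gamma> powr \<alpha>)"

lemma cone_const_nonneg: "0 \<le> cone_const"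
  using CW_nonneg gamma_powr_bounds by (simp add: cone_const_def)

lemma cone_const_invariant: "(CW + cone_const) * \<gamma> powr \<alpha> \<le> cone_const"
proof -
  have "cone_const = CW + cone_const * \<gamma> powr \<alpha>"
    using gamma_powr_bounds by (simp add: cone_const_def field_simps)
  moreover have "CW * \<gamma> powr \<alpha> \<le> CW" using CW_nonneg gamma_powr_bounds by (simp add: mult_left_le)
  ultimately show ?thesis by (simp add: algebra_simps)
qed

definition holder_cone :: "((nat \<Rightarrow> nat) \<Rightarrow> ('n set \<Rightarrow> 'n set \<Rightarrow> real)) \<Rightarrow> bool" where
  "holder_cone A \<longleftrightarrow> (\<forall>x\<in>\<Sigma>. symm_on Iq (A x) \<and> psd_on Iq (A x)) \<and>
     (\<forall>x\<in>\<Sigma>. \<forall>y\<in>\<Sigma>. \<forall>c. qform Iq (A x) c \<le> exp (cone_const * dgam \<gamma> x y powr \<alpha>) * qform Iq (A y) c)"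

lemma holder_cone_psd: "holder_cone A \<Longrightarrow> x \<in> \<Sigma> \<Longrightarrow> 0 \<le> qform Iq (A x) c"
  by (simp add: holder_cone_def psd_on_def)

lemma qform_ruelle_nonneg: "holder_cone A \<Longrightarrow> x \<in> \<Sigma> \<Longrightarrow> 0 \<le> qform Iq (R W A x) c"
  by (auto simp: qform_ruelle scons_in_Sigma_sp holder_cone_psd intro!: sum_nonneg)

definition W_min :: real where
  "W_min = W base_point - CW"

lemma W_min_le: "y \<in> \<Sigma> \<Longrightarrow> W_min \<le> W y"
  using W_holder base_point_in_Sigma mult_left_le[OF dgam_powr_le_1 CW_nonneg, of base_point y]
  unfolding W_min_def by fastforce

lemma W_scons_le:
  assumes "x \<in> \<Sigma>" "y \<in> \<Sigma>" "i < t"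
  shows "W (scons i x) \<le> W (scons i y) + CW * \<gamma> powr \<alpha> * dgam \<gamma> x y powr \<alpha>"
  using W_holder scons_in_Sigma_sp[OF assms(1,3)] scons_in_Sigma_sp[OF assms(2,3)]
  by (fastforce simp: dgam_powr_scons mult_ac)

lemma holder_cone_ruelle:
  assumes A: "holder_cone A"
  shows "holder_cone (R W A)"
  unfolding holder_cone_def
proof (intro conjI ballI allI)
  fix x assume x: "x \<in> \<Sigma>"
  show "symm_on Iq (R W A x)" using A x scons_in_Sigma_sp by (intro symm_on_ruelle) (auto simp: holder_cone_def)
  show "psd_on Iq (R W A x)" using qform_ruelle_nonneg[OF A x] by (simp add: psd_on_def)
next
  fix x y c assume x: "x \<in> \<Sigma>" and y: "y \<in> \<Sigma>"
  define d where "d = dgam \<gamma> x y powr \<alpha>"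
  define E where "E = exp ((CW + cone_const) * \<gamma> powr \<alpha> * d)"
  have "qform Iq (R W A x) c = (\<Sum>i<t. exp (W (scons i x)) * qform Iq (A (scons i x)) (pb i c))"
    by (simp add: qform_ruelle)
  also have "\<dots> \<le> (\<Sum>i<t. E * (exp (W (scons i y)) * qform Iq (A (scons i y)) (pb i c)))"
  proof (rule sum_mono)
    fix i assume "i \<in> {..<t}"
    hence i: "scons i x \<in> \<Sigma>" "scons i y \<in> \<Sigma>" "i < t" using x y scons_in_Sigma_sp by auto
    have "exp (W (scons i x)) \<le> exp (CW * \<gamma> powr \<alpha> * d) * exp (W (scons i y))"
      using W_scons_le[OF x y i(3)] by (simp add: d_def exp_add[symmetric] add.commute)
    moreover have "qform Iq (A (scons i x)) (pb i c) \<le> exp (cone_const *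
        dgam \<gamma> (scons i x) (scons i y) powr \<alpha>) * qform Iq (A (scons i y)) (pb i c)"
      using A i unfolding holder_cone_def by blast
    hence "qform Iq (A (scons i x)) (pb i c)
        \<le> exp (cone_const * \<gamma> powr \<alpha> * d) * qform Iq (A (scons i y)) (pb i c)"
      by (simp add: dgam_powr_scons d_def mult_ac)
    ultimately have "exp (W (scons i x)) * qform Iq (A (scons i x)) (pb i c) \<le>
       (exp (CW * \<gamma> powr \<alpha> * d) * exp (W (scons i y))) *
       (exp (cone_const * \<gamma> powr \<alpha> * d) * qform Iq (A (scons i y)) (pb i c))"
      using holder_cone_psd[OF A i(1)] by (intro mult_mono) auto
    thus "exp (W (scons i x)) * qform Iq (A (scons i x)) (pb i c) \<le>
        E * (exp (W (scons i y)) * qform Iq (A (scons i y)) (pb i c))"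
      unfolding E_def distrib_right exp_add by (simp add: mult_ac)
  qed
  also have "\<dots> = E * qform Iq (R W A y) c" by (simp add: qform_ruelle sum_distrib_left)
  also have "\<dots> \<le> exp (cone_const * d) * qform Iq (R W A y) c"
    using cone_const_invariant qform_ruelle_nonneg[OF A y]
    by (intro mult_right_mono) (auto simp: E_def d_def mult_right_mono)
  finally show "qform Iq (R W A x) c \<le> exp (cone_const * dgam \<gamma> x y powr \<alpha>) * qform Iq (R W A y) c"
    by (simp add: d_def)
qed

definition id_field :: "(nat \<Rightarrow> nat) \<Rightarrow> 'n set \<Rightarrow> 'n set \<Rightarrow> real" where
  "id_field = (\<lambda>x I J. of_bool (I = J))"

lemma qform_id_field: "qform Iq (id_field x) c = sqnorm Iq c"
  unfolding id_field_def by (simp add: qform_id)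

lemma trace_on_id_field: "trace_on Iq (id_field x) = real (card Iq)"
  by (simp add: trace_on_def id_field_def)

lemma holder_cone_id_field: "holder_cone id_field"
  unfolding holder_cone_def
proof (intro conjI ballI allI)
  fix x y c
  show "symm_on Iq (id_field x)" by (auto simp: symm_on_def id_field_def)
  show "psd_on Iq (id_field x)" by (simp add: psd_on_def qform_id_field sqnorm_nonneg)
  have "1 \<le> exp (cone_const * dgam \<gamma> x y powr \<alpha>)" using cone_const_nonneg by simp
  thus "qform Iq (id_field x) c \<le> exp (cone_const * dgam \<gamma> x y powr \<alpha>) * qform Iq (id_field y) c"
    using sqnorm_nonneg[of Iq c] by (simp add: qform_id_field mult_le_cancel_right1)
qed

lemma holder_cone_base_point:
  assumes "holder_cone A" "x \<in> \<Sigma>"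
  shows "qform Iq (A x) c \<le> exp cone_const * qform Iq (A base_point) c"
    and "qform Iq (A base_point) c \<le> exp cone_const * qform Iq (A x) c"
proof -
  have "exp (cone_const * dgam \<gamma> x y powr \<alpha>) \<le> exp cone_const" for x y
    using cone_const_nonneg dgam_powr_le_1 by (simp add: mult_left_le)
  thus "qform Iq (A x) c \<le> exp cone_const * qform Iq (A base_point) c"
    "qform Iq (A base_point) c \<le> exp cone_const * qform Iq (A x) c"
    using assms base_point_in_Sigma holder_cone_psd[OF assms(1)] unfolding holder_cone_def
    by (meson mult_right_mono order_trans)+
qed

lemma holder_cone_upper_bound:
  assumes "holder_cone A" "x \<in> \<Sigma>"
  shows "qform Iq (A x) c \<le> exp cone_const * real (card Iq) * trace_on Iq (A base_point) * sqnorm Iq c"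
proof -
  have "qform Iq (A base_point) c \<le> trace_on Iq (A base_point) * real (card Iq) * sqnorm Iq c"
    using assms base_point_in_Sigma by (intro qform_le_trace_on) (auto simp: holder_cone_def)
  hence "exp cone_const * qform Iq (A base_point) c
      \<le> exp cone_const * (trace_on Iq (A base_point) * real (card Iq) * sqnorm Iq c)"
    by (rule mult_left_mono) simp
  with holder_cone_base_point(1)[OF assms, of c] show ?thesis by (simp only: mult_ac)
qed

definition doeblin_const :: real where
  "doeblin_const = exp (W_min - cone_const) * g\<^sup>2 / real (card Iq)"

lemma doeblin_const_pos: "0 < doeblin_const"
  using g_pos card_Iq_pos by (simp add: doeblin_const_def)

lemma qform_ruelle_lower_bound:
  assumes A: "holder_cone A" and x: "x \<in> \<Sigma>"
  shows "doeblin_const * trace_on Iq (A base_point) * sqnorm Iq c \<le> qform Iq (R W A x) c"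
proof -
  let ?x0 = base_point
  have A0: "symm_on Iq (A ?x0)" "psd_on Iq (A ?x0)"
    using A base_point_in_Sigma by (auto simp: holder_cone_def)
  have "doeblin_const * trace_on Iq (A ?x0) * sqnorm Iq c
      = exp W_min * exp (- cone_const) * (g\<^sup>2 / real (card Iq) * trace_on Iq (A ?x0) * sqnorm Iq c)"
    by (simp add: doeblin_const_def exp_diff exp_minus field_simps)
  also have "\<dots> \<le> exp W_min * exp (- cone_const) * (\<Sum>i<t. qform Iq (A ?x0) (pb i c))"
    using nondegenerate_sum_qform_ge[of Iq "{..<t}" "A ?x0" g pb c] qidx_nonempty A0 g_pos nondegenerate
    by (intro mult_left_mono) auto
  also have "\<dots> = (\<Sum>i<t. exp W_min * (exp (- cone_const) * qform Iq (A ?x0) (pb i c)))"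
    by (simp add: sum_distrib_left mult_ac)
  also have "\<dots> \<le> (\<Sum>i<t. exp (W (scons i x)) * qform Iq (A (scons i x)) (pb i c))"
  proof (rule sum_mono, rule mult_mono)
    fix i assume "i \<in> {..<t}"
    hence i: "scons i x \<in> \<Sigma>" using x scons_in_Sigma_sp by auto
    show "exp W_min \<le> exp (W (scons i x))" using W_min_le[OF i] by simp
    show "exp (- cone_const) * qform Iq (A ?x0) (pb i c) \<le> qform Iq (A (scons i x)) (pb i c)"
      using holder_cone_base_point(2)[OF A i, of "pb i c"] by (simp add: exp_minus field_simps)
    show "0 \<le> exp (- cone_const) * qform Iq (A ?x0) (pb i c)"
      using holder_cone_psd[OF A base_point_in_Sigma] by simp
  qed simp
  also have "\<dots> = qform Iq (R W A x) c" by (simp add: qform_ruelle)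
  finally show ?thesis .
qed

definition iter_id :: "nat \<Rightarrow> (nat \<Rightarrow> nat) \<Rightarrow> 'n set \<Rightarrow> 'n set \<Rightarrow> real" where
  "iter_id n = (R W ^^ n) id_field"

lemma iter_id_0: "iter_id 0 = id_field"
  by (simp add: iter_id_def)

lemma iter_id_Suc: "iter_id (Suc n) = R W (iter_id n)"
  by (simp add: iter_id_def)

lemma iter_id_add: "iter_id (n + m) = (R W ^^ n) (iter_id m)"
  by (simp add: iter_id_def funpow_add)

lemma holder_cone_iter_id: "holder_cone (iter_id n)"
  by (induction n) (simp_all add: iter_id_0 iter_id_Suc holder_cone_id_field holder_cone_ruelle)

definition tr_iter :: "nat \<Rightarrow> real" where
  "tr_iter n = trace_on Iq (iter_id n base_point)"

lemma tr_iter_0: "tr_iter 0 = real (card Iq)"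
  by (simp add: tr_iter_def iter_id_0 trace_on_id_field)

lemma tr_iter_submult:
  "tr_iter (n + m) \<le> exp cone_const * real (card Iq) * tr_iter m * tr_iter n"
proof -
  have "\<forall>y\<in>\<Sigma>. \<forall>c. 1 * qform Iq (iter_id m y) c
      \<le> (exp cone_const * real (card Iq) * tr_iter m) * qform Iq (id_field y) c"
    using holder_cone_upper_bound[OF holder_cone_iter_id] by (simp add: qform_id_field tr_iter_def mult_ac)
  from qform_ruelle_iter_mono[OF this base_point_in_Sigma, where W = W and n = n]
  have "qform Iq (iter_id (n + m) base_point) c
      \<le> (exp cone_const * real (card Iq) * tr_iter m) * qform Iq (iter_id n base_point) c" for c
    by (simp only: iter_id_add[symmetric] iter_id_def[of n, symmetric] mult_1_left)
  thus ?thesis unfolding tr_iter_def[of "n + m"] tr_iter_def[of n] by (intro trace_on_le_of_qform_le) auto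
qed

lemma tr_iter_supermult: "doeblin_const * tr_iter m * tr_iter n \<le> tr_iter (n + Suc m)"
proof -
  have "\<forall>y\<in>\<Sigma>. \<forall>c. (doeblin_const * tr_iter m) * qform Iq (id_field y) c \<le> 1 * qform Iq (iter_id (Suc m) y) c"
    using qform_ruelle_lower_bound[OF holder_cone_iter_id]
    by (simp add: qform_id_field tr_iter_def iter_id_Suc mult_ac)
  from qform_ruelle_iter_mono[OF this base_point_in_Sigma, where W = W and n = n]
  have "(doeblin_const * tr_iter m) * qform Iq (iter_id n base_point) c
      \<le> qform Iq (iter_id (n + Suc m) base_point) c" for c
    by (simp only: iter_id_add[symmetric] iter_id_def[of n, symmetric] mult_1_left)
  thus ?thesis unfolding tr_iter_def[of "n + Suc m"] tr_iter_def[of n]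
    by (intro trace_on_ge_of_qform_ge) auto
qed

lemma tr_iter_pos: "0 < tr_iter n"
proof (induction n)
  case 0 thus ?case using card_Iq_pos by (simp add: tr_iter_0)
next
  case (Suc n)
  have "0 < doeblin_const * tr_iter n * tr_iter 0" using doeblin_const_pos card_Iq_pos Suc by (simp add: tr_iter_0)
  thus ?case using tr_iter_supermult[of n 0] by simp
qed

lemma one_le_card_Iq: "1 \<le> real (card Iq)"
proof -
  have "1 \<le> card Iq" using qidx_nonempty by (simp add: Suc_le_eq card_gt_0_iff)
  thus ?thesis by simp
qed

lemma one_le_exp_cone_const_card: "1 \<le> exp cone_const * real (card Iq)"
proof -
  have "1 \<le> exp cone_const" using cone_const_nonneg by simp
  thus ?thesis using mult_mono[of 1 "exp cone_const" 1 "real (card Iq)"] one_le_card_Iq by simp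
qed

definition growth_rate :: real where
  "growth_rate = (SOME \<rho>. 0 < \<rho> \<and> (\<forall>n\<ge>1. doeblin_const * tr_iter (n - 1) \<le> \<rho> ^ n \<and>
      \<rho> ^ n \<le> exp cone_const * real (card Iq) * tr_iter n))"

lemma growth_rate: "0 < growth_rate" "\<forall>n\<ge>1. doeblin_const * tr_iter (n - 1) \<le> growth_rate ^ n \<and>
      growth_rate ^ n \<le> exp cone_const * real (card Iq) * tr_iter n"
proof -
  have "\<exists>\<rho>>0. \<forall>n\<ge>1. doeblin_const * tr_iter (n - 1) \<le> \<rho> ^ n \<and>
      \<rho> ^ n \<le> exp cone_const * real (card Iq) * tr_iter n"
  proof (rule sub_supermultiplicative_growth_rate)
    fix n m :: nat
    show "0 < exp cone_const * real (card Iq) * tr_iter n" using card_Iq_pos tr_iter_pos by simp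
    show "0 < doeblin_const * tr_iter (n - 1)" using doeblin_const_pos tr_iter_pos by simp
    show "exp cone_const * real (card Iq) * tr_iter (n + m)
        \<le> exp cone_const * real (card Iq) * tr_iter n * (exp cone_const * real (card Iq) * tr_iter m)"
      using tr_iter_submult[of n m] card_Iq_pos by (simp add: mult_ac mult_left_mono)
    assume "1 \<le> n" "1 \<le> m"
    then obtain n' m' where "n = Suc n'" "m = Suc m'" by (metis One_nat_def Suc_le_D)
    thus "doeblin_const * tr_iter (n - 1) * (doeblin_const * tr_iter (m - 1))
        \<le> doeblin_const * tr_iter (n + m - 1)"
      using tr_iter_supermult[of m' n'] doeblin_const_pos by (simp add: mult_ac mult_left_mono)
  next
    fix n :: nat assume "1 \<le> n"
    then obtain n' where n': "n = Suc n'" by (metis One_nat_def Suc_le_D)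
    have "doeblin_const * tr_iter n' * 1 \<le> doeblin_const * tr_iter n' * real (card Iq)"
      using one_le_card_Iq doeblin_const_pos tr_iter_pos[of n'] by (intro mult_left_mono) auto
    also have "\<dots> \<le> tr_iter n" using tr_iter_supermult[of n' 0] by (simp add: tr_iter_0 n' mult_ac)
    also have "\<dots> \<le> exp cone_const * real (card Iq) * tr_iter n"
      using one_le_exp_cone_const_card tr_iter_pos[of n] by (simp add: mult_le_cancel_right1)
    finally show "doeblin_const * tr_iter (n - 1) \<le> exp cone_const * real (card Iq) * tr_iter n"
      by (simp add: n')
  qed
  from someI_ex[OF this] show "0 < growth_rate" "\<forall>n\<ge>1. doeblin_const * tr_iter (n - 1) \<le> growth_rate ^ n \<and>
      growth_rate ^ n \<le> exp cone_const * real (card Iq) * tr_iter n"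
    unfolding growth_rate_def by blast+
qed

lemma tr_iter_le_growth_rate: "doeblin_const * tr_iter k \<le> growth_rate ^ Suc k"
  using growth_rate(2) by force

lemma growth_rate_le_tr_iter: "growth_rate ^ k \<le> exp cone_const * real (card Iq) * tr_iter k"
proof (cases "k = 0")
  case True
  thus ?thesis using mult_mono[OF one_le_exp_cone_const_card one_le_card_Iq]
    by (simp add: tr_iter_0)
qed (use growth_rate(2) in auto)

lemma growth_rate_pos: "0 < growth_rate"
  by (rule growth_rate(1))

definition cesaro :: "nat \<Rightarrow> (nat \<Rightarrow> nat) \<Rightarrow> 'n set \<Rightarrow> 'n set \<Rightarrow> real" where
  "cesaro n x = (\<lambda>I J. (1 / real n) * (\<Sum>k<n. iter_id k x I J / growth_rate ^ k))"

lemma qform_cesaro: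
  "qform Iq (cesaro n x) c = (1 / real n) * (\<Sum>k<n. qform Iq (iter_id k x) c / growth_rate ^ k)"
  unfolding cesaro_def qform_scale qform_sum
  by (simp add: qform_scale[where a = "1 / growth_rate ^ _", simplified])

lemma trace_on_cesaro:
  "trace_on Iq (cesaro n x) = (1 / real n) * (\<Sum>k<n. trace_on Iq (iter_id k x) / growth_rate ^ k)"
  unfolding trace_on_def cesaro_def by (simp add: sum_distrib_left sum_divide_distrib sum.swap[of _ Iq])

lemma qform_ruelle_cesaro:
  "qform Iq (R W (cesaro n) x) c = (1 / real n) * (\<Sum>k<n. qform Iq (iter_id (Suc k) x) c / growth_rate ^ k)"
proof -
  have "qform Iq (R W (cesaro n) x) c = (\<Sum>i<t. exp (W (scons i x)) * ((1 / real n) *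
      (\<Sum>k<n. qform Iq (iter_id k (scons i x)) (pb i c) / growth_rate ^ k)))"
    by (simp add: qform_ruelle qform_cesaro)
  also have "\<dots> = (1 / real n) * (\<Sum>k<n. (\<Sum>i<t. exp (W (scons i x)) *
      qform Iq (iter_id k (scons i x)) (pb i c)) / growth_rate ^ k)"
    by (simp add: sum_distrib_left sum_divide_distrib mult_ac sum.swap[of _ "{..<t}"])
  also have "\<dots> = (1 / real n) * (\<Sum>k<n. qform Iq (iter_id (Suc k) x) c / growth_rate ^ k)"
    by (simp add: iter_id_Suc qform_ruelle)
  finally show ?thesis .
qed

lemma holder_cone_cesaro: "holder_cone (cesaro n)"
  unfolding holder_cone_def
proof (intro conjI ballI allI)
  fix x assume x: "x \<in> \<Sigma>"
  show "symm_on Iq (cesaro n x)"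
    using holder_cone_iter_id x unfolding symm_on_def holder_cone_def cesaro_def by (auto intro!: sum.cong)
  show "psd_on Iq (cesaro n x)"
    using holder_cone_psd[OF holder_cone_iter_id x] growth_rate_pos
    by (auto simp: psd_on_def qform_cesaro intro!: divide_nonneg_nonneg sum_nonneg)
next
  fix x y c assume x: "x \<in> \<Sigma>" and y: "y \<in> \<Sigma>"
  let ?E = "exp (cone_const * dgam \<gamma> x y powr \<alpha>)"
  have "qform Iq (cesaro n x) c = (1 / real n) * (\<Sum>k<n. qform Iq (iter_id k x) c / growth_rate ^ k)"
    by (rule qform_cesaro)
  also have "\<dots> \<le> (1 / real n) * (\<Sum>k<n. ?E * qform Iq (iter_id k y) c / growth_rate ^ k)"
    using holder_cone_iter_id x y growth_rate_pos
    by (intro mult_left_mono sum_mono divide_right_mono) (auto simp: holder_cone_def)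
  also have "\<dots> = ?E * qform Iq (cesaro n y) c"
    by (simp add: qform_cesaro sum_distrib_left sum_divide_distrib mult_ac)
  finally show "qform Iq (cesaro n x) c \<le> ?E * qform Iq (cesaro n y) c" .
qed

lemma qform_iter_id_le:
  assumes x: "x \<in> \<Sigma>"
  shows "qform Iq (iter_id k x) c / growth_rate ^ k
    \<le> exp cone_const * real (card Iq) * growth_rate / doeblin_const * sqnorm Iq c"
proof -
  have "qform Iq (iter_id k x) c \<le> exp cone_const * real (card Iq) * tr_iter k * sqnorm Iq c"
    using holder_cone_upper_bound[OF holder_cone_iter_id x] by (simp add: tr_iter_def)
  also have "\<dots> \<le> exp cone_const * real (card Iq) * (growth_rate ^ Suc k / doeblin_const) * sqnorm Iq c"
    using tr_iter_le_growth_rate[of k] doeblin_const_pos sqnorm_nonneg[of Iq c] card_Iq_pos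
    by (intro mult_right_mono mult_left_mono) (auto simp: field_simps)
  finally show ?thesis using growth_rate_pos by (simp add: field_simps)
qed

definition defect_const :: real where
  "defect_const = growth_rate * (exp cone_const * real (card Iq) * growth_rate / doeblin_const + 1)"

text \<open>The defect telescopes to the difference of the last and the first normalized iterate.\<close>

lemma qform_ruelle_cesaro_defect:
  assumes x: "x \<in> \<Sigma>" and n: "1 \<le> n"
  shows "\<bar>qform Iq (R W (cesaro n) x) c - growth_rate * qform Iq (cesaro n x) c\<bar>
    \<le> defect_const / real n * sqnorm Iq c"
proof -
  define qq where "qq k = qform Iq (iter_id k x) c / growth_rate ^ k" for k
  have "qform Iq (R W (cesaro n) x) c = (growth_rate / real n) * (\<Sum>k<n. qq (Suc k))"
    using growth_rate_pos by (simp add: qform_ruelle_cesaro qq_def sum_distrib_left field_simps)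
  moreover have "growth_rate * qform Iq (cesaro n x) c = (growth_rate / real n) * (\<Sum>k<n. qq k)"
    by (simp add: qform_cesaro qq_def)
  ultimately have "qform Iq (R W (cesaro n) x) c - growth_rate * qform Iq (cesaro n x) c
      = (growth_rate / real n) * (\<Sum>k<n. qq (Suc k) - qq k)"
    by (simp add: sum_subtractf right_diff_distrib)
  also have "\<dots> = (growth_rate / real n) * (qq n - qq 0)" by (simp add: sum_lessThan_telescope)
  finally have eq: "qform Iq (R W (cesaro n) x) c - growth_rate * qform Iq (cesaro n x) c
      = (growth_rate / real n) * (qq n - qq 0)" .
  have "qq 0 = sqnorm Iq c" by (simp add: qq_def iter_id_0 qform_id_field)
  moreover have "0 \<le> qq n"
    using holder_cone_psd[OF holder_cone_iter_id x] growth_rate_pos by (simp add: qq_def)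
  moreover have "qq n \<le> exp cone_const * real (card Iq) * growth_rate / doeblin_const * sqnorm Iq c"
    unfolding qq_def by (rule qform_iter_id_le[OF x])
  moreover have "defect_const / growth_rate * sqnorm Iq c
      = exp cone_const * real (card Iq) * growth_rate / doeblin_const * sqnorm Iq c + sqnorm Iq c"
    using growth_rate_pos by (simp add: defect_const_def field_simps)
  ultimately have "\<bar>qq n - qq 0\<bar> \<le> defect_const / growth_rate * sqnorm Iq c"
    using sqnorm_nonneg[of Iq c] growth_rate_pos doeblin_const_pos card_Iq_pos
      abs_le_iff[of "qq n - qq 0"] by (simp add: mult_nonneg_nonneg)
  have "\<bar>growth_rate / real n * (qq n - qq 0)\<bar> = growth_rate / real n * \<bar>qq n - qq 0\<bar>"
    using growth_rate_pos by (simp add: abs_mult)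
  also have "\<dots> \<le> growth_rate / real n * (defect_const / growth_rate * sqnorm Iq c)"
    using \<open>\<bar>qq n - qq 0\<bar> \<le> _\<close> growth_rate_pos by (intro mult_left_mono) auto
  also have "\<dots> = defect_const / real n * sqnorm Iq c" using growth_rate_pos by simp
  finally show ?thesis unfolding eq .
qed

lemma trace_on_cesaro_lower:
  assumes "1 \<le> n"
  shows "1 / (exp cone_const * real (card Iq)) \<le> trace_on Iq (cesaro n base_point)"
proof -
  have "(1 / real n) * (\<Sum>k<n. 1 / (exp cone_const * real (card Iq)))
      \<le> (1 / real n) * (\<Sum>k<n. trace_on Iq (iter_id k base_point) / growth_rate ^ k)"
  proof (intro mult_left_mono sum_mono)
    fix k
    show "1 / (exp cone_const * real (card Iq)) \<le> trace_on Iq (iter_id k base_point) / growth_rate ^ k"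
      using growth_rate_le_tr_iter[of k] growth_rate_pos card_Iq_pos by (simp add: tr_iter_def field_simps)
  qed simp
  thus ?thesis using assms by (simp add: trace_on_cesaro)
qed

lemma trace_on_cesaro_upper: "trace_on Iq (cesaro n base_point) \<le> growth_rate / doeblin_const"
proof (cases "n = 0")
  case True thus ?thesis using growth_rate_pos doeblin_const_pos by (simp add: trace_on_cesaro)
next
  case False
  have "trace_on Iq (cesaro n base_point) \<le> (1 / real n) * (\<Sum>k<n. growth_rate / doeblin_const)"
    unfolding trace_on_cesaro
  proof (intro mult_left_mono sum_mono)
    fix k
    show "trace_on Iq (iter_id k base_point) / growth_rate ^ k \<le> growth_rate / doeblin_const"
      using tr_iter_le_growth_rate[of k] growth_rate_pos doeblin_const_pos
      by (simp add: tr_iter_def field_simps)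
  qed simp
  thus ?thesis using False by simp
qed

definition cesaro_entry_bound :: real where
  "cesaro_entry_bound = exp cone_const * growth_rate / doeblin_const"

lemma cesaro_entry_le:
  assumes x: "x \<in> \<Sigma>" and IJ: "I \<in> Iq" "J \<in> Iq"
  shows "\<bar>cesaro n x I J\<bar> \<le> cesaro_entry_bound"
proof -
  have c: "symm_on Iq (cesaro n x)" "psd_on Iq (cesaro n x)"
    using holder_cone_cesaro x by (auto simp: holder_cone_def)
  have "\<bar>cesaro n x I J\<bar> \<le> trace_on Iq (cesaro n x)" using psd_on_entry_le_trace_on[OF _ c IJ] by simp
  also have "\<dots> \<le> exp cone_const * trace_on Iq (cesaro n base_point)"
    using holder_cone_base_point(1)[OF holder_cone_cesaro x] by (intro trace_on_le_of_qform_le) auto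
  also have "\<dots> \<le> exp cone_const * (growth_rate / doeblin_const)"
    using trace_on_cesaro_upper by (intro mult_left_mono) auto
  finally show ?thesis by (simp add: cesaro_entry_bound_def)
qed

lemma holder_cone_entry_diff_le:
  assumes A: "holder_cone A" and x: "x \<in> \<Sigma>" and y: "y \<in> \<Sigma>" and IJ: "I \<in> Iq" "J \<in> Iq"
  shows "\<bar>A y I J - A x I J\<bar> \<le> 3 * ((exp (cone_const * dgam \<gamma> x y powr \<alpha>) - 1) *
    (exp cone_const * real (card Iq) * trace_on Iq (A base_point)))"
proof -
  define E where "E = exp (cone_const * dgam \<gamma> x y powr \<alpha>)"
  define B where "B = exp cone_const * real (card Iq) * trace_on Iq (A base_point)"
  have E1: "1 \<le> E" using cone_const_nonneg by (simp add: E_def)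
  have B: "z \<in> \<Sigma> \<Longrightarrow> qform Iq (A z) c \<le> B * sqnorm Iq c" for z c
    using holder_cone_upper_bound[OF A] by (simp add: B_def)
  have symm: "symm_on Iq (\<lambda>I J. A y I J - A x I J)" using A x y by (auto simp: symm_on_def holder_cone_def)
  have "\<bar>qform Iq (\<lambda>I J. A y I J - A x I J) c\<bar> \<le> (E - 1) * B * sqnorm Iq c" for c
  proof -
    have "qform Iq (A y) c \<le> E * qform Iq (A x) c" "qform Iq (A x) c \<le> E * qform Iq (A y) c"
      using A x y dgam_commute[of \<gamma> x y] unfolding holder_cone_def E_def by metis+
    moreover have "(E - 1) * qform Iq (A z) c \<le> (E - 1) * (B * sqnorm Iq c)" if "z \<in> \<Sigma>" for z
      using B[OF that] E1 by (intro mult_left_mono) auto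
    ultimately have "(E - 1) * qform Iq (A x) c \<le> (E - 1) * (B * sqnorm Iq c)"
      "(E - 1) * qform Iq (A y) c \<le> (E - 1) * (B * sqnorm Iq c)"
      "qform Iq (A y) c \<le> E * qform Iq (A x) c" "qform Iq (A x) c \<le> E * qform Iq (A y) c"
      using x y by auto
    thus ?thesis unfolding qform_diff abs_le_iff by (simp add: algebra_simps)
  qed
  from symm_on_entry_le_of_qform_le[OF _ symm this IJ] show ?thesis by (simp add: E_def B_def)
qed

lemma holder_cone_continuous:
  assumes A: "holder_cone A" and x: "x \<in> \<Sigma>" and e: "0 < e"
  shows "\<exists>\<delta>>0. \<forall>y\<in>\<Sigma>. dgam \<gamma> x y < \<delta> \<longrightarrow> (\<forall>I\<in>Iq. \<forall>J\<in>Iq. \<bar>A y I J - A x I J\<bar> < e)"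
proof -
  define B where "B = exp cone_const * real (card Iq) * trace_on Iq (A base_point)"
  have B0: "0 \<le> B"
    using A base_point_in_Sigma trace_on_nonneg[of Iq "A base_point"] by (auto simp: B_def holder_cone_def)
  define e1 where "e1 = e / (3 * B + 1)"
  have e1: "0 < e1" using e B0 by (simp add: e1_def)
  define \<delta> where "\<delta> = (ln (1 + e1) / (cone_const + 1)) powr (1 / \<alpha>)"
  have \<delta>: "0 < \<delta>" using e1 cone_const_nonneg by (simp add: \<delta>_def)
  have \<delta>\<alpha>: "\<delta> powr \<alpha> = ln (1 + e1) / (cone_const + 1)"
    using e1 cone_const_nonneg alpha by (simp add: \<delta>_def powr_powr)
  have "\<bar>A y I J - A x I J\<bar> < e" if y: "y \<in> \<Sigma>" "dgam \<gamma> x y < \<delta>" and IJ: "I \<in> Iq" "J \<in> Iq" for y I J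
  proof -
    have "dgam \<gamma> x y powr \<alpha> \<le> \<delta> powr \<alpha>"
      using y(2) alpha dgam_nonneg[OF gamma(1)] by (intro powr_mono2) auto
    hence "cone_const * dgam \<gamma> x y powr \<alpha> \<le> cone_const * (ln (1 + e1) / (cone_const + 1))"
      using cone_const_nonneg \<delta>\<alpha> by (intro mult_left_mono) auto
    also have "\<dots> < ln (1 + e1)" using e1 cone_const_nonneg by (simp add: field_simps)
    finally have "exp (cone_const * dgam \<gamma> x y powr \<alpha>) - 1 < e1"
      using e1 by (metis add.commute diff_less_eq exp_less_mono exp_ln add_pos_pos zero_less_one)
    hence "3 * ((exp (cone_const * dgam \<gamma> x y powr \<alpha>) - 1) * B) \<le> 3 * (e1 * B)"
      using B0 by (intro mult_left_mono mult_right_mono) auto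
    also have "\<dots> < e" using e B0 by (simp add: e1_def field_simps)
    finally show ?thesis using holder_cone_entry_diff_le[OF A x y(1) IJ] by (simp add: B_def)
  qed
  thus ?thesis using \<delta> by blast
qed

text \<open>The means are indexed from \<open>Suc n\<close> because \<open>cesaro 0\<close> is the empty mean \<open>0\<close>.\<close>

definition cesaro_entries :: "nat \<Rightarrow> (nat \<Rightarrow> nat) \<times> 'n set \<times> 'n set \<Rightarrow> real" where
  "cesaro_entries n = (\<lambda>(x, I, J). if x \<in> \<Sigma> \<and> I \<in> Iq \<and> J \<in> Iq then cesaro (Suc n) x I J else 0)"

definition limit_entries :: "(nat \<Rightarrow> nat) \<times> 'n set \<times> 'n set \<Rightarrow> real" where
  "limit_entries = (SOME H. \<forall>Z. finite Z \<longrightarrow>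
     (\<forall>\<epsilon>>0. \<forall>N0. \<exists>n\<ge>N0. \<forall>z\<in>Z. \<bar>cesaro_entries n z - H z\<bar> < \<epsilon>))"

definition limit_field :: "(nat \<Rightarrow> nat) \<Rightarrow> 'n set \<Rightarrow> 'n set \<Rightarrow> real" where
  "limit_field x I J = (if I \<in> Iq \<and> J \<in> Iq then limit_entries (x, I, J) else 0)"

lemma cesaro_entries_bound: "\<bar>cesaro_entries n z\<bar> \<le> cesaro_entry_bound"
proof -
  obtain x I J where z: "z = (x, I, J)" by (metis prod_cases3)
  have "0 \<le> cesaro_entry_bound"
    using growth_rate_pos doeblin_const_pos by (simp add: cesaro_entry_bound_def)
  thus ?thesis using cesaro_entry_le[of x I J "Suc n"] by (simp add: z cesaro_entries_def)
qed

lemma limit_entries_cluster: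
  "\<forall>Z. finite Z \<longrightarrow> (\<forall>\<epsilon>>0. \<forall>N0. \<exists>n\<ge>N0. \<forall>z\<in>Z. \<bar>cesaro_entries n z - limit_entries z\<bar> < \<epsilon>)"
  unfolding limit_entries_def
  by (rule someI_ex[OF bounded_pointwise_cluster_point[OF cesaro_entries_bound]])

lemma cesaro_approx:
  assumes "finite X" "X \<subseteq> \<Sigma>" "0 < \<epsilon>"
  shows "\<exists>n\<ge>N0. \<forall>x\<in>X. \<forall>I\<in>Iq. \<forall>J\<in>Iq. \<bar>cesaro (Suc n) x I J - limit_field x I J\<bar> < \<epsilon>"
proof -
  obtain n where n: "n \<ge> N0" "\<forall>z\<in>X \<times> Iq \<times> Iq. \<bar>cesaro_entries n z - limit_entries z\<bar> < \<epsilon>"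
  proof -
    have "finite (X \<times> Iq \<times> Iq)" using assms(1) by simp
    thus ?thesis using limit_entries_cluster assms(3) that by blast
  qed
  have "\<bar>cesaro (Suc n) x I J - limit_field x I J\<bar> < \<epsilon>" if "x \<in> X" "I \<in> Iq" "J \<in> Iq" for x I J
    using n(2)[rule_format, of "(x, I, J)"] that assms(2) by (auto simp: cesaro_entries_def limit_field_def)
  thus ?thesis using n(1) by blast
qed

lemma qform_cesaro_approx:
  assumes Z: "finite Z" "fst ` Z \<subseteq> \<Sigma>" and \<epsilon>: "0 < \<epsilon>"
  shows "\<exists>n\<ge>N0. \<forall>(x, c)\<in>Z. \<bar>qform Iq (cesaro (Suc n) x) c - qform Iq (limit_field x) c\<bar> < \<epsilon>"
proof -
  define M where "M = real (card Iq) * (\<Sum>c\<in>snd ` Z. sqnorm Iq c) + 1"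
  have M: "real (card Iq) * sqnorm Iq c < M" if "c \<in> snd ` Z" for c
  proof -
    have "sqnorm Iq c \<le> (\<Sum>c\<in>snd ` Z. sqnorm Iq c)"
      using that Z(1) by (intro member_le_sum) (auto simp: sqnorm_nonneg)
    hence "real (card Iq) * sqnorm Iq c \<le> real (card Iq) * (\<Sum>c\<in>snd ` Z. sqnorm Iq c)"
      by (intro mult_left_mono) auto
    thus ?thesis unfolding M_def by linarith
  qed
  have "0 \<le> (\<Sum>c\<in>snd ` Z. sqnorm Iq c)" by (intro sum_nonneg sqnorm_nonneg)
  hence M0: "0 < M" using card_Iq_pos by (simp add: M_def add_nonneg_pos)
  obtain n where n: "n \<ge> N0"
      "\<forall>x\<in>fst ` Z. \<forall>I\<in>Iq. \<forall>J\<in>Iq. \<bar>cesaro (Suc n) x I J - limit_field x I J\<bar> < \<epsilon> / M"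
    using cesaro_approx[of "fst ` Z" "\<epsilon> / M" N0] Z \<epsilon> M0 by auto
  have "\<bar>qform Iq (cesaro (Suc n) x) c - qform Iq (limit_field x) c\<bar> < \<epsilon>" if "(x, c) \<in> Z" for x c
  proof -
    have x: "x \<in> fst ` Z" and c: "c \<in> snd ` Z" using that by force+
    have "\<bar>qform Iq (cesaro (Suc n) x) c - qform Iq (limit_field x) c\<bar>
        \<le> \<epsilon> / M * (real (card Iq) * sqnorm Iq c)"
      using qform_diff_le[of Iq "cesaro (Suc n) x" "limit_field x" "\<epsilon> / M" c] n(2) x
      by (simp add: less_imp_le mult.assoc)
    also have "\<dots> < \<epsilon> / M * M" using M[OF c] \<epsilon> M0 by (intro mult_strict_left_mono) auto
    finally show ?thesis using M0 by simp
  qed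
  thus ?thesis using n(1) by blast
qed

lemma limit_field_symm_on:
  assumes x: "x \<in> \<Sigma>"
  shows "symm_on Iq (limit_field x)"
  unfolding symm_on_def
proof (intro ballI)
  fix I J assume IJ: "I \<in> Iq" "J \<in> Iq"
  have "\<bar>limit_field x I J - limit_field x J I\<bar> \<le> e" if e: "0 < e" for e
  proof -
    obtain n where n: "\<forall>I\<in>Iq. \<forall>J\<in>Iq. \<bar>cesaro (Suc n) x I J - limit_field x I J\<bar> < e / 2"
      using cesaro_approx[of "{x}" "e / 2" 0] x e by auto
    have "cesaro (Suc n) x I J = cesaro (Suc n) x J I"
      using holder_cone_cesaro x IJ by (auto simp: holder_cone_def symm_on_def)
    moreover have "\<bar>cesaro (Suc n) x I J - limit_field x I J\<bar> < e / 2"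
      "\<bar>cesaro (Suc n) x J I - limit_field x J I\<bar> < e / 2" using n IJ by auto
    ultimately show ?thesis unfolding abs_le_iff abs_less_iff by linarith
  qed
  thus "limit_field x I J = limit_field x J I"
    using dense_eq0_I[of "limit_field x I J - limit_field x J I"] by simp
qed

lemma limit_field_psd: "x \<in> \<Sigma> \<Longrightarrow> 0 \<le> qform Iq (limit_field x) c"
proof (rule field_le_epsilon)
  fix e :: real assume x: "x \<in> \<Sigma>" and e: "0 < e"
  obtain n where "\<bar>qform Iq (cesaro (Suc n) x) c - qform Iq (limit_field x) c\<bar> < e"
    using qform_cesaro_approx[of "{(x, c)}" e 0] x e by auto
  moreover have "0 \<le> qform Iq (cesaro (Suc n) x) c" using holder_cone_psd[OF holder_cone_cesaro x] .
  ultimately show "0 \<le> qform Iq (limit_field x) c + e" by linarith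
qed

lemma limit_field_holder:
  assumes x: "x \<in> \<Sigma>" and y: "y \<in> \<Sigma>"
  shows "qform Iq (limit_field x) c \<le> exp (cone_const * dgam \<gamma> x y powr \<alpha>) * qform Iq (limit_field y) c"
proof (rule field_le_epsilon)
  fix e :: real assume e: "0 < e"
  define E where "E = exp (cone_const * dgam \<gamma> x y powr \<alpha>)"
  have E0: "0 < E" by (simp add: E_def)
  obtain n where n: "\<forall>(z, c)\<in>{(x, c), (y, c)}.
      \<bar>qform Iq (cesaro (Suc n) z) c - qform Iq (limit_field z) c\<bar> < e / (E + 1)"
    using qform_cesaro_approx[of "{(x, c), (y, c)}" "e / (E + 1)" 0] x y e E0 by auto
  have "qform Iq (cesaro (Suc n) x) c \<le> E * qform Iq (cesaro (Suc n) y) c"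
    using holder_cone_cesaro x y by (simp add: holder_cone_def E_def)
  moreover have "E * qform Iq (cesaro (Suc n) y) c \<le> E * (qform Iq (limit_field y) c + e / (E + 1))"
    using n E0 by (intro mult_left_mono) auto
  moreover have "E * (e / (E + 1)) + e / (E + 1) = (E + 1) * (e / (E + 1))"
    by (simp only: distrib_right mult_1_left)
  hence "E * (e / (E + 1)) + e / (E + 1) = e" using E0 by simp
  ultimately show "qform Iq (limit_field x) c \<le> exp (cone_const * dgam \<gamma> x y powr \<alpha>) * qform Iq (limit_field y) c + e"
    using n unfolding E_def[symmetric] by (auto simp: distrib_left)
qed

lemma holder_cone_limit_field: "holder_cone limit_field"
  unfolding holder_cone_def psd_on_def
  using limit_field_symm_on limit_field_psd limit_field_holder by auto

lemma qform_ruelle_limit_field: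
  assumes x: "x \<in> \<Sigma>"
  shows "qform Iq (R W limit_field x) c = growth_rate * qform Iq (limit_field x) c"
proof -
  define S where "S = (\<Sum>i<t. exp (W (scons i x)))"
  define M where "M = S + growth_rate"
  have M0: "0 < M" using growth_rate_pos by (simp add: M_def S_def add_nonneg_pos sum_nonneg)
  have "\<bar>qform Iq (R W limit_field x) c - growth_rate * qform Iq (limit_field x) c\<bar> \<le> e" if e: "0 < e" for e
  proof -
    define Z where "Z = insert (x, c) ((\<lambda>i. (scons i x, pb i c)) ` {..<t})"
    have Z: "finite Z" "fst ` Z \<subseteq> \<Sigma>" using x scons_in_Sigma_sp by (auto simp: Z_def)
    obtain N0 :: nat where N0: "2 * defect_const * sqnorm Iq c / e < real N0"
      using reals_Archimedean2 by blast
    obtain n where n: "n \<ge> N0"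
      "\<forall>(z, d)\<in>Z. \<bar>qform Iq (cesaro (Suc n) z) d - qform Iq (limit_field z) d\<bar> < e / (2 * M)"
      using qform_cesaro_approx[OF Z, of "e / (2 * M)" N0] e M0 by auto
    have d1: "\<bar>qform Iq (R W limit_field x) c - qform Iq (R W (cesaro (Suc n)) x) c\<bar>
        \<le> S * (e / (2 * M))"
      unfolding S_def using n(2) by (intro qform_ruelle_diff_le) (auto simp: Z_def abs_minus_commute less_imp_le)
    have "\<bar>qform Iq (R W (cesaro (Suc n)) x) c - growth_rate * qform Iq (cesaro (Suc n) x) c\<bar>
        \<le> defect_const / real (Suc n) * sqnorm Iq c"
      by (rule qform_ruelle_cesaro_defect[OF x]) simp
    also have "\<dots> \<le> e / 2"
    proof -
      have "2 * defect_const * sqnorm Iq c / e < real (Suc n)" using N0 n(1) by linarith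
      hence "2 * defect_const * sqnorm Iq c \<le> e * real (Suc n)"
        using e by (simp add: field_simps)
      thus ?thesis using e by (simp add: field_simps)
    qed
    finally have d2: "\<bar>qform Iq (R W (cesaro (Suc n)) x) c - growth_rate * qform Iq (cesaro (Suc n) x) c\<bar>
        \<le> e / 2" .
    have d3: "\<bar>qform Iq (cesaro (Suc n) x) c - qform Iq (limit_field x) c\<bar> \<le> e / (2 * M)"
      using n(2) by (simp add: Z_def)
    have "\<bar>growth_rate * qform Iq (cesaro (Suc n) x) c - growth_rate * qform Iq (limit_field x) c\<bar>
        \<le> growth_rate * (e / (2 * M))"
      using growth_rate_pos mult_left_mono[OF d3, of growth_rate]
      by (simp add: abs_mult right_diff_distrib[symmetric])
    moreover have "S * (e / (2 * M)) + growth_rate * (e / (2 * M)) = M * (e / (2 * M))"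
      by (simp only: M_def distrib_right)
    moreover have "M * (e / (2 * M)) = e / 2" using M0 by simp
    ultimately show ?thesis using d1 d2 by linarith
  qed
  thus ?thesis
    using dense_eq0_I[of "qform Iq (R W limit_field x) c - growth_rate * qform Iq (limit_field x) c"]
    by simp
qed

lemma ruelle_limit_field:
  assumes x: "x \<in> \<Sigma>" and K: "K \<in> Iq" "K' \<in> Iq"
  shows "R W limit_field x K K' = growth_rate * limit_field x K K'"
proof -
  have "symm_on Iq (R W limit_field x)"
    using limit_field_symm_on x scons_in_Sigma_sp by (intro symm_on_ruelle) auto
  moreover have "symm_on Iq (\<lambda>I J. growth_rate * limit_field x I J)"
    using limit_field_symm_on[OF x] by (simp add: symm_on_def)
  moreover have "qform Iq (R W limit_field x) c = qform Iq (\<lambda>I J. growth_rate * limit_field x I J) c" for c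
    using qform_ruelle_limit_field[OF x] by (simp add: qform_scale)
  ultimately show ?thesis
    using symm_on_eq_if_qform_eq[of Iq "R W limit_field x" "\<lambda>I J. growth_rate * limit_field x I J"] K
    by simp
qed

lemma trace_on_limit_field_pos: "0 < trace_on Iq (limit_field base_point)"
proof -
  let ?x0 = base_point and ?b = "1 / (exp cone_const * real (card Iq))"
  have "?b \<le> trace_on Iq (limit_field ?x0)"
  proof (rule field_le_epsilon)
    fix e :: real assume e: "0 < e"
    have "fst ` (\<lambda>I. (?x0, basis_vec I)) ` Iq \<subseteq> \<Sigma>" using base_point_in_Sigma by auto
    then obtain n where n: "\<bar>qform Iq (cesaro (Suc n) ?x0) (basis_vec I) - qform Iq (limit_field ?x0) (basis_vec I)\<bar>
        < e / real (card Iq)" if "I \<in> Iq" for I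
      using qform_cesaro_approx[of "(\<lambda>I. (?x0, basis_vec I)) ` Iq" "e / real (card Iq)" 0]
        e card_Iq_pos by auto
    have "trace_on Iq (cesaro (Suc n) ?x0) - trace_on Iq (limit_field ?x0)
        = (\<Sum>I\<in>Iq. qform Iq (cesaro (Suc n) ?x0) (basis_vec I) - qform Iq (limit_field ?x0) (basis_vec I))"
      by (simp add: trace_on_eq_sum_qform sum_subtractf)
    also have "\<dots> \<le> (\<Sum>I\<in>Iq. e / real (card Iq))" using n by (intro sum_mono) (simp add: abs_less_iff less_imp_le)
    also have "\<dots> = e" using card_Iq_pos qidx_nonempty by simp
    finally show "?b \<le> trace_on Iq (limit_field ?x0) + e"
      using trace_on_cesaro_lower[of "Suc n"] by simp
  qed
  moreover have "0 < ?b" using card_Iq_pos by simp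
  ultimately show ?thesis by linarith
qed

lemma limit_field_posdef:
  assumes x: "x \<in> \<Sigma>"
  shows "posdef q (limit_field x)"
  unfolding posdef_iff_qform
proof (intro allI impI)
  fix c :: "'n set \<Rightarrow> real" assume "\<exists>I\<in>Iq. c I \<noteq> 0"
  then obtain I where I: "I \<in> Iq" "c I \<noteq> 0" by blast
  have "0 < (c I)\<^sup>2" using I by simp
  also have "\<dots> \<le> sqnorm Iq c" using I by (intro sq_le_sqnorm) auto
  finally have "0 < doeblin_const * trace_on Iq (limit_field base_point) * sqnorm Iq c"
    using doeblin_const_pos trace_on_limit_field_pos by simp
  also have "\<dots> \<le> qform Iq (R W limit_field x) c"
    by (rule qform_ruelle_lower_bound[OF holder_cone_limit_field x])
  also have "\<dots> = growth_rate * qform Iq (limit_field x) c" by (rule qform_ruelle_limit_field[OF x])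
  finally show "0 < qform Iq (limit_field x) c" using growth_rate_pos by (simp add: zero_less_mult_iff)
qed

lemma limit_field_contM: "contM t \<gamma> q limit_field"
  unfolding contM_def
proof (intro conjI ballI allI impI)
  fix x assume x: "x \<in> \<Sigma>"
  show "limit_field x \<in> Mq q"
    using limit_field_symm_on[OF x] by (auto simp: Mq_def symm_on_def limit_field_def)
next
  fix x and e :: real assume x: "x \<in> \<Sigma>" and e: "0 < e"
  obtain \<delta> where \<delta>: "\<delta> > 0"
      "\<forall>y\<in>\<Sigma>. dgam \<gamma> x y < \<delta> \<longrightarrow> (\<forall>I\<in>Iq. \<forall>J\<in>Iq. \<bar>limit_field y I J - limit_field x I J\<bar> < e)"
    using holder_cone_continuous[OF holder_cone_limit_field x e] by blast
  show "\<exists>\<delta>>0. \<forall>y\<in>\<Sigma>. dgam \<gamma> x y < \<delta> \<longrightarrow> (\<forall>I J. \<bar>limit_field y I J - limit_field x I J\<bar> < e)"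
  proof (intro exI[of _ \<delta>] conjI \<delta>(1) ballI impI allI)
    fix y I J assume y: "y \<in> \<Sigma>" "dgam \<gamma> x y < \<delta>"
    show "\<bar>limit_field y I J - limit_field x I J\<bar> < e"
      using \<delta>(2) y e by (cases "I \<in> Iq \<and> J \<in> Iq") (auto simp: limit_field_def)
  qed
qed

lemma pos_eigenpair_limit_field: "pos_eigenpair W growth_rate limit_field"
  unfolding pos_eigenpair_def
  using growth_rate_pos limit_field_contM limit_field_posdef ruelle_limit_field by auto

end

section \<open>Monotonicity of the pressure\<close>

context ruelle_setting
begin

lemma betaW_pos_eigenpair:
  assumes "holder t \<gamma> \<alpha> W"
  shows "\<exists>A. pos_eigenpair W (betaW t \<gamma> \<psi> q W) A"
proof -
  obtain CW where "0 \<le> CW" "\<forall>x\<in>\<Sigma>. \<forall>y\<in>\<Sigma>. \<bar>W x - W y\<bar> \<le> CW * dgam \<gamma> x y powr \<alpha>"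
    using holder_nonneg_const[OF assms] by blast
  then interpret ruelle_potential t \<gamma> \<alpha> \<psi> q g W CW by unfold_locales
  show ?thesis using pos_eigenpair_limit_field betaW_eqI[OF pos_eigenpair_limit_field] by auto
qed

lemma pressure_mono:
  assumes "holder t \<gamma> \<alpha> W1" "holder t \<gamma> \<alpha> W2" and W: "\<forall>x\<in>\<Sigma>. W1 x \<le> W2 x + \<delta>"
  shows "pressure t \<gamma> \<psi> q W1 \<le> pressure t \<gamma> \<psi> q W2 + \<delta>"
proof -
  obtain A1 where e1: "pos_eigenpair W1 (betaW t \<gamma> \<psi> q W1) A1" using betaW_pos_eigenpair[OF assms(1)] ..
  obtain A2 where e2: "pos_eigenpair W2 (betaW t \<gamma> \<psi> q W2) A2" using betaW_pos_eigenpair[OF assms(2)] ..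
  have pos: "0 < betaW t \<gamma> \<psi> q W1" "0 < betaW t \<gamma> \<psi> q W2" using e1 e2 by (auto simp: pos_eigenpair_def)
  have "ln (betaW t \<gamma> \<psi> q W1) \<le> ln (exp \<delta> * betaW t \<gamma> \<psi> q W2)"
    using pos_eigenvalue_comparison[OF e1 e2 W] pos by simp
  thus ?thesis using pos by (simp add: pressure_def ln_mult)
qed

lemma pressure_scaled_decreasing:
  assumes V: "holder t \<gamma> \<alpha> V" and m: "\<forall>x\<in>\<Sigma>. m \<le> V x" and ab: "a \<le> b"
  shows "pressure t \<gamma> \<psi> q (\<lambda>x. - b * V x) \<le> pressure t \<gamma> \<psi> q (\<lambda>x. - a * V x) - m * (b - a)"
proof -
  have "\<forall>x\<in>\<Sigma>. - b * V x \<le> - a * V x + - (m * (b - a))"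
    using mult_left_mono[of m "V x" "b - a" for x] m ab by (simp add: algebra_simps)
  from pressure_mono[OF holder_scale[OF V] holder_scale[OF V] this] show ?thesis by simp
qed

lemma pressure_scaled_continuous:
  assumes V: "holder t \<gamma> \<alpha> V"
  shows "continuous_on UNIV (\<lambda>c. pressure t \<gamma> \<psi> q (\<lambda>x. - c * V x))"
proof -
  obtain M where M: "\<forall>y\<in>\<Sigma>. \<bar>V y\<bar> \<le> M" using holder_bounded[OF V] by blast
  let ?p = "\<lambda>c. pressure t \<gamma> \<psi> q (\<lambda>x. - c * V x)"
  have lip: "?p a \<le> ?p b + \<bar>a - b\<bar> * max M 0" for a b
  proof (rule pressure_mono[OF holder_scale[OF V] holder_scale[OF V]], intro ballI)
    fix x assume "x \<in> \<Sigma>"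
    hence "\<bar>V x\<bar> \<le> max M 0" using M by (simp add: le_max_iff_disj)
    hence "\<bar>a - b\<bar> * \<bar>V x\<bar> \<le> \<bar>a - b\<bar> * max M 0" by (rule mult_left_mono) simp
    moreover have "(b - a) * V x \<le> \<bar>a - b\<bar> * \<bar>V x\<bar>"
      by (metis abs_ge_self abs_minus_commute abs_mult)
    ultimately have "(b - a) * V x \<le> \<bar>a - b\<bar> * max M 0" by linarith
    thus "- a * V x \<le> - b * V x + \<bar>a - b\<bar> * max M 0" by (simp add: algebra_simps)
  qed
  have "dist (?p a) (?p b) \<le> max M 0 * dist a b" for a b
    using lip[of a b] lip[of b a] by (simp add: dist_real_def abs_le_iff abs_minus_commute mult.commute)
  hence "(max M 0)-lipschitz_on UNIV ?p" by (intro lipschitz_onI) auto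
  thus ?thesis by (rule lipschitz_on_continuous_on)
qed

end

lemma decreasing_unique_root:
  fixes p :: "real \<Rightarrow> real"
  assumes cont: "continuous_on UNIV p" and m: "0 < m"
    and dec: "\<And>a b. a \<le> b \<Longrightarrow> p b \<le> p a - m * (b - a)"
  shows "(\<exists>!c. p c = 0) \<and> (\<forall>c. p c = 0 \<longrightarrow> (0 < p 0 \<longrightarrow> 0 < c) \<and> (p 0 < 0 \<longrightarrow> c < 0))"
proof -
  have less: "p b < p a" if "a < b" for a b
  proof -
    have "0 < m * (b - a)" using m that by simp
    thus ?thesis using dec[of a b] that by linarith
  qed
  define b where "b = p 0 / m"
  have "\<exists>c. p c = 0"
  proof (cases "0 \<le> p 0")
    case True
    hence "0 \<le> b" "p b \<le> 0" using m dec[of 0 b] by (auto simp: b_def)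
    thus ?thesis using IVT2'[of p b 0 0] True cont by (auto intro: continuous_on_subset)
  next
    case False
    hence "b \<le> 0" "0 \<le> p b" using m dec[of b 0] by (auto simp: b_def divide_nonpos_pos)
    thus ?thesis using IVT2'[of p 0 0 b] False cont by (auto intro: continuous_on_subset)
  qed
  moreover have "c = c'" if "p c = 0" "p c' = 0" for c c'
    using less[of c c'] less[of c' c] that by (cases c c' rule: linorder_cases) auto
  moreover have "(0 < p 0 \<longrightarrow> 0 < c) \<and> (p 0 < 0 \<longrightarrow> c < 0)" if "p c = 0" for c
    using less[of c 0] less[of 0 c] that by (cases c "0::real" rule: linorder_cases) auto
  ultimately show ?thesis by blast
qed

theorem lemma4p1:
  fixes t q :: nat and \<gamma> \<alpha> :: real
    and \<psi> :: "nat \<Rightarrow> real^('n::{finite,linorder}) \<Rightarrow> real^('n::{finite,linorder})"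
    and V :: "(nat \<Rightarrow> nat) \<Rightarrow> real"
  assumes gam: "0 < \<gamma>" "\<gamma> < 1"
    and alpha: "0 < \<alpha>" "\<alpha> \<le> 1"
    and affine: "\<forall>i<t. bij (\<psi> i) \<and> linear (\<lambda>x. \<psi> i x - \<psi> i 0)"
    and contr: "\<forall>i<t. \<exists>\<rho><1. \<forall>x y. dist (\<psi> i x) (\<psi> i y) \<le> \<rho> * dist x y"
    and q: "1 \<le> q" "q \<le> CARD('n)"
    and NDq: "\<exists>\<gamma>'>0. \<forall>c e :: 'n::{finite,linorder} set \<Rightarrow> real. \<exists>i<t.
               \<bar>ipq q (pullback (Dlin (\<psi> i)) q c) e\<bar> \<ge> \<gamma>' * normq q c * normq q e"
    and Vh: "holder t \<gamma> \<alpha> V"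
    and Vpos: "\<forall>x\<in>Sigma_sp t. V x > 0"
  shows "(\<exists>!c::real. pressure t \<gamma> \<psi> q (\<lambda>x. - c * V x) = 0) \<and>
         (\<forall>c::real. pressure t \<gamma> \<psi> q (\<lambda>x. - c * V x) = 0 \<longrightarrow>
             (pressure t \<gamma> \<psi> q (\<lambda>x. 0) > 0 \<longrightarrow> c > 0) \<and>
             (pressure t \<gamma> \<psi> q (\<lambda>x. 0) < 0 \<longrightarrow> c < 0))"
proof -
  from NDq obtain g where "0 < g" and "\<forall>c e :: 'n set \<Rightarrow> real. \<exists>i<t.
      g * normq q c * normq q e \<le> \<bar>ipq q (pullback (Dlin (\<psi> i)) q c) e\<bar>" by blast
  hence "0 < g" "\<forall>c e :: 'n set \<Rightarrow> real. \<exists>i\<in>{..<t}. g * sqrt (sqnorm (qidx q) c) *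
      sqrt (sqnorm (qidx q) e) \<le> \<bar>\<Sum>I\<in>qidx q. pullback (Dlin (\<psi> i)) q c I * e I\<bar>"
    by (simp_all add: normq_eq_sqrt_sqnorm ipq_def Bex_def lessThan_iff)
  then interpret ruelle_setting t \<gamma> \<alpha> \<psi> q g
    using gam alpha qidx_nonempty[OF q(2)] by unfold_locales auto
  obtain m where "0 < m" "\<forall>x\<in>\<Sigma>. m \<le> V x" using holder_pos_bounded_below[OF Vh Vpos] by blast
  from decreasing_unique_root[OF pressure_scaled_continuous[OF Vh] this(1)
      pressure_scaled_decreasing[OF Vh this(2)]]
  show ?thesis by simp
qed

end
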